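(* Let $p\ge2$ and $\mathcal F\in(\mathbb R^n\otimes\mathrm S^p\mathbb R^n)\setminus\{0\}$, not of the form $a\otimes^{p+1}u$ with $\|u\|_2=1$, $a\ne0$. Let $\tilde f_k:=\|\mathcal F^{\circ k}\|_\sigma^{(p-1)/(p^k-1)}$. Then $\tilde f_k\le\|\mathcal F\|_\sigma$ for all $k\in\mathbb N$; $\|\mathcal F^{\circ(k+l)}\|_\sigma\le\|\mathcal F^{\circ k}\|_\sigma\|\mathcal F^{\circ l}\|_\sigma^{p^k}$ for all $k,l\in\mathbb N$; for each fixed $m\in\mathbb N$ the sequence $(\tilde f_{m2^l})_{l\ge0}$ is nonincreasing; the limit $\rho_3(\mathcal F):=\lim_{k\to\infty}\tilde f_k$ exists; and $\rho_3(\mathcal F)\le\rho_2(\mathcal F)$. Moreover, for $k,l\in\mathbb N$, equality holds in the second inequality iff either $\mathcal F^{\circ l}=0$, or there exists $x^\star\in\mathbb R^n$ with $\|x^\star\|_2=1$, $\|\mathbf F^{\circ l}(x^\star)\|_2=\|\mathcal F^{\circ l}\|_\sigma$, and $\|\mathbf F^{\circ k}(y)\|_2=\|\mathcal F^{\circ k}\|_\sigma$ for $y=\|\mathcal F^{\circ l}\|_\sigma^{-1}\mathbf F^{\circ l}(x^\star)$.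
   Context: Tensors carry the entrywise inner product, the Hilbert–Schmidt norm $\|\cdot\|_{HS}$ and the spectral norm $\|\mathcal T\|_\sigma=\max|\langle\mathcal T,x_1\otimes\cdots\otimes x_d\rangle|$ over unit vectors. $\mathbb R^n\otimes\mathrm S^p\mathbb R^n$ denotes tensors $\mathcal F=[f_{i_1,\dots,i_{p+1}}]$ in $\mathbb R^n\otimes(\bigotimes^p\mathbb R^n)$ symmetric in the last $p$ indices; it corresponds bijectively to the homogeneous polynomial map $\mathbf F:\mathbb R^n\to\mathbb R^n$ of degree $p$, $\mathbf F(x)=\mathcal F\times\otimes^px$, i.e. $F_i(x)=\sum_{i_2,\dots,i_{p+1}}f_{i,i_2,\dots,i_{p+1}}x_{i_2}\cdots x_{i_{p+1}}$; one has $\|\mathcal F\|_\sigma=\max_{x\ne0}\|\mathbf F(x)\|_2/\|x\|_2^p$. The composition $\mathcal G\circ\mathcal F$ of $\mathcal F\in\mathbb R^m\otimes\mathrm S^p\mathbb R^n$, $\mathcal G\in\mathbb R^l\otimes\mathrm S^q\mathbb R^m$ is the unique element of $\mathbb R^l\otimes\mathrm S^{pq}\mathbb R^n$ whose map is $\mathbf G\circ\mathbf F$; $\mathcal F^{\circ k}$ is the $k$-fold composition, corresponding to the iterate $\mathbf F^{\circ k}$. $\rho_2(\mathcal F):=\lim_{k\to\infty}\|\mathcal F^{\circ k}\|_{HS}^{(p-1)/(p^k-1)}$ (this limit exists). *)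

theory Defs
  imports "HOL-Analysis.Analysis"
begin

text \<open>A tensor in R^n (x) S^d R^n is represented as f :: 'n => 'n list => real,
  where f i is is the entry f_{i,is_1,...,is_d} for lists is of length d.
  The dimension n is CARD('n).\<close>

type_synonym 'n ptensor = "'n \<Rightarrow> 'n list \<Rightarrow> real"

definition idx_lists :: "nat \<Rightarrow> ('n::finite) list set" where
  "idx_lists d = {is. length is = d}"

definition sym_tensor :: "nat \<Rightarrow> ('n::finite) ptensor \<Rightarrow> bool" where
  "sym_tensor d f \<longleftrightarrow>
     (\<forall>i is. length is \<noteq> d \<longrightarrow> f i is = 0) \<and>
     (\<forall>i is js. mset is = mset js \<longrightarrow> f i is = f i js)"

definition tensor_map :: "nat \<Rightarrow> ('n::finite) ptensor \<Rightarrow> real^'n \<Rightarrow> real^'n" where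
  "tensor_map d f x = (\<chi> i. \<Sum>is\<in>idx_lists d. f i is * (\<Prod>j<d. x $ (is ! j)))"

definition hs_norm :: "nat \<Rightarrow> ('n::finite) ptensor \<Rightarrow> real" where
  "hs_norm d f = sqrt (\<Sum>i\<in>UNIV. \<Sum>is\<in>idx_lists d. (f i is)\<^sup>2)"

definition spec_norm :: "nat \<Rightarrow> ('n::finite) ptensor \<Rightarrow> real" where
  "spec_norm d f = Sup {\<bar>\<Sum>i\<in>UNIV. \<Sum>is\<in>idx_lists d.
        f i is * y $ i * (\<Prod>j<d. (xs j) $ (is ! j))\<bar> | y xs.
        norm y = 1 \<and> (\<forall>j<d. norm (xs j) = 1)}"

definition titer :: "nat \<Rightarrow> ('n::finite) ptensor \<Rightarrow> nat \<Rightarrow> 'n ptensor" where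
  "titer p f k = (THE h. sym_tensor (p ^ k) h \<and> tensor_map (p ^ k) h = (tensor_map p f ^^ k))"

definition rho2 :: "nat \<Rightarrow> ('n::finite) ptensor \<Rightarrow> real" where
  "rho2 p f = lim (\<lambda>k. hs_norm (p ^ k) (titer p f k) powr ((real p - 1) / (real p ^ k - 1)))"

definition ftilde :: "nat \<Rightarrow> ('n::finite) ptensor \<Rightarrow> nat \<Rightarrow> real" where
  "ftilde p f k = spec_norm (p ^ k) (titer p f k) powr ((real p - 1) / (real p ^ k - 1))"

definition rho3 :: "nat \<Rightarrow> ('n::finite) ptensor \<Rightarrow> real" where
  "rho3 p f = lim (ftilde p f)"

end

theory Submission
  imports Defs "HOL-Combinatorics.Permutations"
begin

text \<open>
  The spectral norm of a symmetric tensor is the maximum of \<open>\<parallel>F(x)\<parallel>\<close> over unit vectors. This is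
  Banach's theorem that a symmetric multilinear form attains its norm on the diagonal; it is proved
  by taking, among the tuples of unit vectors maximizing the form, one of maximal frame potential
  and observing that two non-parallel slots could be merged into a maximizer of larger potential.

  Hence \<open>\<sigma>\<^sub>k = \<parallel>F\<^sup>\<circ>\<^sup>k\<parallel>\<^sub>\<sigma>\<close> is the maximum of \<open>\<parallel>F\<^sup>k(x)\<parallel>\<close> on the sphere, and homogeneity of
  \<open>F\<^sup>k\<close> gives \<open>\<sigma>\<^sub>k\<^sub>+\<^sub>l \<le> \<sigma>\<^sub>k \<sigma>\<^sub>l\<^sup>p\<^sup>^\<^sup>k\<close>, with equality exactly when a maximizer of \<open>F\<^sup>l\<close> is sent
  to a maximizer of \<open>F\<^sup>k\<close>. In logarithms \<open>c\<^sub>k = ln \<sigma>\<^sub>k\<close> the inequality is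
  \<open>c\<^sub>k\<^sub>+\<^sub>l \<le> c\<^sub>k + p\<^sup>k c\<^sub>l\<close>, so \<open>c\<^sub>k / (p\<^sup>k - 1)\<close> is bounded by its value at any \<open>m < k\<close> up to
  \<open>O(p\<^sup>-\<^sup>k)\<close>: the normalized roots \<open>\<sigma>\<^sub>k\<^sup>(\<^sup>p\<^sup>-\<^sup>1\<^sup>)\<^sup>/\<^sup>(\<^sup>p\<^sup>k\<^sup>-\<^sup>1\<^sup>)\<close> are bounded by \<open>\<sigma>\<^sub>1\<close>,
  decrease along \<open>k \<mapsto> 2k\<close> and converge to their infimum. The Hilbert-Schmidt norms of the
  iterates satisfy the same inequality (composition followed by symmetrization is
  Hilbert-Schmidt submultiplicative by Cauchy-Schwarz) and dominate the spectral norms, which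
  gives \<open>\<rho>\<^sub>3 \<le> \<rho>\<^sub>2\<close>.
\<close>

lemma finite_idx_lists [simp]: "finite (idx_lists d :: ('n::finite) list set)"
proof -
  have "idx_lists d = {xs::'n list. set xs \<subseteq> UNIV \<and> length xs = d}"
    by (auto simp: idx_lists_def)
  thus ?thesis using finite_lists_length_eq[of "UNIV::'n set" d] by simp
qed

lemma idx_lists_0 [simp]: "idx_lists 0 = {[]}"
  by (auto simp: idx_lists_def)

lemma sum_idx_lists_Suc:
  "(\<Sum>is\<in>idx_lists (Suc d). (\<phi> is::'b::comm_monoid_add))
     = (\<Sum>a\<in>(UNIV::('n::finite) set). \<Sum>is\<in>idx_lists d. \<phi> (a # is))"
proof -
  have img: "idx_lists (Suc d) = (\<lambda>(a, is). a # is) ` (UNIV \<times> idx_lists d)"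
    by (auto simp: idx_lists_def image_iff length_Suc_conv)
  have inj: "inj_on (\<lambda>(a, is). a # is) (UNIV \<times> idx_lists d :: ('n \<times> 'n list) set)"
    by (auto simp: inj_on_def)
  show ?thesis
    unfolding img by (subst sum.reindex[OF inj]) (simp add: sum.cartesian_product case_prod_unfold)
qed

lemma sum_idx_lists_add:
  "(\<Sum>is\<in>idx_lists (a + b). (\<phi> is::'b::comm_monoid_add))
     = (\<Sum>u\<in>idx_lists a. \<Sum>v\<in>idx_lists b. \<phi> (u @ (v::('n::finite) list)))"
  by (induction a arbitrary: \<phi>) (simp_all add: sum_idx_lists_Suc)

lemma sum_idx_lists_prod:
  "(\<Sum>is\<in>idx_lists d. \<Prod>j<d. g j (is ! j))
     = (\<Prod>j<d. \<Sum>a\<in>(UNIV::('n::finite) set). (g j a :: 'b::comm_semiring_1))"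
proof (induction d arbitrary: g)
  case (Suc d)
  have "(\<Sum>is\<in>idx_lists (Suc d). \<Prod>j<Suc d. g j (is ! j))
      = (\<Sum>a\<in>(UNIV::'n set). \<Sum>is\<in>idx_lists d. g 0 a * (\<Prod>j<d. g (Suc j) (is ! j)))"
    by (simp add: sum_idx_lists_Suc prod.lessThan_Suc_shift del: prod.lessThan_Suc)
  also have "\<dots> = (\<Sum>a\<in>(UNIV::'n set). g 0 a) * (\<Prod>j<d. \<Sum>a\<in>(UNIV::'n set). g (Suc j) a)"
    by (simp add: sum_distrib_left[symmetric] sum_distrib_right Suc.IH[of "\<lambda>j. g (Suc j)"])
  finally show ?case
    by (simp add: prod.lessThan_Suc_shift del: prod.lessThan_Suc)
qed simp

definition chunk :: "nat \<Rightarrow> nat \<Rightarrow> 'a list \<Rightarrow> 'a list" where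
  "chunk r t is = take r (drop (t * r) is)"

lemma chunk_0_append: "length u = r \<Longrightarrow> chunk r 0 (u @ v) = u"
  by (simp add: chunk_def)

lemma chunk_Suc_append: "length u = r \<Longrightarrow> chunk r (Suc t) (u @ v) = chunk r t v"
  by (simp add: chunk_def add.commute)

lemma prod_chunks_Suc_append:
  "length u = r \<Longrightarrow> (\<Prod>t<Suc q. h t (chunk r t (u @ v))) = h 0 u * (\<Prod>t<q. h (Suc t) (chunk r t v))"
  by (simp add: prod.lessThan_Suc_shift chunk_0_append chunk_Suc_append del: prod.lessThan_Suc)

lemma sum_idx_lists_chunks:
  "(\<Sum>is\<in>idx_lists (q * r). \<Prod>t<q. h t (chunk r t is))
     = (\<Prod>t<q. \<Sum>c\<in>idx_lists r. (h t (c::('n::finite) list) :: 'b::comm_semiring_1))"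
proof (induction q arbitrary: h)
  case (Suc q)
  have "(\<Sum>is\<in>idx_lists (Suc q * r). \<Prod>t<Suc q. h t (chunk r t is))
     = (\<Sum>u\<in>idx_lists r. \<Sum>v\<in>idx_lists (q * r). \<Prod>t<Suc q. h t (chunk r t (u @ v)))"
    by (simp only: mult_Suc sum_idx_lists_add)
  also have "\<dots> = (\<Sum>u\<in>idx_lists r. \<Sum>v\<in>idx_lists (q * r). h 0 u * (\<Prod>t<q. h (Suc t) (chunk r t v)))"
    by (intro sum.cong refl) (simp add: prod_chunks_Suc_append idx_lists_def del: prod.lessThan_Suc)
  also have "\<dots> = (\<Sum>u\<in>idx_lists r. h 0 u) * (\<Prod>t<q. \<Sum>c\<in>idx_lists r. h (Suc t) c)"
    by (simp add: sum_distrib_left[symmetric] sum_distrib_right Suc.IH[of "\<lambda>t. h (Suc t)"])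
  finally show ?case
    by (simp add: prod.lessThan_Suc_shift del: prod.lessThan_Suc)
qed simp

definition monomial :: "real^'n \<Rightarrow> 'n list \<Rightarrow> real" where
  "monomial x is = (\<Prod>a\<leftarrow>is. x $ a)"

lemma monomial_Nil [simp]: "monomial x [] = 1"
  and monomial_Cons [simp]: "monomial x (a # is) = x $ a * monomial x is"
  by (simp_all add: monomial_def)

lemma monomial_append: "monomial x (u @ v) = monomial x u * monomial x v"
  by (simp add: monomial_def)

lemma prod_nth_eq_monomial: "length is = d \<Longrightarrow> (\<Prod>j<d. x $ (is ! j)) = monomial x is"
proof (induction "is" arbitrary: d)
  case (Cons a "is")
  then obtain d' where "d = Suc d'" "length is = d'" by auto
  thus ?case using Cons.IH by (simp add: prod.lessThan_Suc_shift del: prod.lessThan_Suc)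
qed simp

lemma tensor_map_component:
  "tensor_map d T x $ i = (\<Sum>is\<in>idx_lists d. T i is * monomial x is)"
  unfolding tensor_map_def by (auto intro!: sum.cong simp: prod_nth_eq_monomial idx_lists_def)

lemma monomial_chunks: "length is = q * r \<Longrightarrow> monomial x is = (\<Prod>t<q. monomial x (chunk r t is))"
proof (induction q arbitrary: "is")
  case (Suc q)
  define u v where "u = take r is" and "v = drop r is"
  have "is = u @ v" "length u = r" "length v = q * r"
    using Suc.prems by (auto simp: u_def v_def)
  thus ?case
    using Suc.IH prod_chunks_Suc_append[where h="\<lambda>_. monomial x"] by (simp add: monomial_append)
qed simp

lemma monomial_mset_eq: "mset ks = mset is \<Longrightarrow> monomial x ks = monomial x is"
  unfolding monomial_def by (metis mset_map prod_mset_prod_list)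

lemma monomial_powers: "monomial (\<chi> a. t ^ w a) is = t ^ (\<Sum>a\<leftarrow>is. w a)"
  by (induction "is") (auto simp: power_add)

definition perm_class :: "'n list \<Rightarrow> 'n list set" where
  "perm_class is = {ks. mset ks = mset is}"

lemma perm_class_subset: "perm_class is \<subseteq> idx_lists (length is)"
  unfolding perm_class_def idx_lists_def by (auto dest: mset_eq_length)

lemma perm_class_eq: "is \<in> idx_lists d \<Longrightarrow> perm_class is = {ks \<in> idx_lists d. mset ks = mset is}"
  using perm_class_subset[of "is"] unfolding perm_class_def idx_lists_def by auto

lemma finite_perm_class [simp]: "finite (perm_class (is::('n::finite) list))"
  by (rule finite_subset[OF perm_class_subset]) simp

lemma card_perm_class_pos: "card (perm_class (is::('n::finite) list)) > 0"
proof -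
  have "is \<in> perm_class is" by (simp add: perm_class_def)
  thus ?thesis by (auto simp: card_gt_0_iff)
qed

lemma sum_perm_class_average:
  fixes \<phi> :: "('n::finite) list \<Rightarrow> real"
  shows "(\<Sum>is\<in>idx_lists d. (\<Sum>ks\<in>perm_class is. \<phi> ks) / real (card (perm_class is)))
     = (\<Sum>is\<in>idx_lists d. \<phi> is)"
proof -
  have "(\<Sum>ks\<in>perm_class is. \<phi> ks) / real (card (perm_class is))
      = (\<Sum>ks\<in>{ks \<in> idx_lists d. mset ks = mset is}. \<phi> ks / real (card (perm_class ks)))"
    if "is \<in> idx_lists d" for "is"
  proof -
    have "perm_class ks = perm_class is" if "ks \<in> perm_class is" for ks
      using that by (simp add: perm_class_def)
    thus ?thesis unfolding sum_divide_distrib perm_class_eq[OF that, symmetric]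
      by (intro sum.cong refl) simp
  qed
  hence "(\<Sum>is\<in>idx_lists d. (\<Sum>ks\<in>perm_class is. \<phi> ks) / real (card (perm_class is)))
      = (\<Sum>is\<in>idx_lists d. \<Sum>ks\<in>{ks \<in> idx_lists d. mset ks = mset is}.
           \<phi> ks / real (card (perm_class ks)))"
    by (intro sum.cong refl)
  also have "\<dots> = (\<Sum>ks\<in>idx_lists d. \<Sum>is\<in>{is \<in> idx_lists d. mset ks = mset is}.
                     \<phi> ks / real (card (perm_class ks)))"
    by (rule sum.swap_restrict) auto
  also have "\<dots> = (\<Sum>ks\<in>idx_lists d. \<phi> ks)"
  proof (intro sum.cong refl)
    fix ks :: "'n list" assume "ks \<in> idx_lists d"
    hence "{is \<in> idx_lists d. mset ks = mset is} = perm_class ks"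
      unfolding perm_class_eq[OF \<open>ks \<in> idx_lists d\<close>] by (intro Collect_cong) auto
    thus "(\<Sum>is\<in>{is \<in> idx_lists d. mset ks = mset is}. \<phi> ks / real (card (perm_class ks))) = \<phi> ks"
      using card_perm_class_pos[of ks] by (simp add: card_gt_0_iff)
  qed
  finally show ?thesis .
qed

definition symmetrize :: "nat \<Rightarrow> ('n::finite) ptensor \<Rightarrow> 'n ptensor" where
  "symmetrize d T i is =
     (if length is = d then (\<Sum>ks\<in>perm_class is. T i ks) / real (card (perm_class is)) else 0)"

lemma sym_tensor_symmetrize: "sym_tensor d (symmetrize d T)"
  unfolding sym_tensor_def symmetrize_def perm_class_def by (auto dest: mset_eq_length)

lemma tensor_map_symmetrize: "tensor_map d (symmetrize d T) = tensor_map d T"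
proof (intro ext iffD2[OF vec_eq_iff] allI)
  fix x i
  have "symmetrize d T i is * monomial x is
      = (\<Sum>ks\<in>perm_class is. T i ks * monomial x ks) / real (card (perm_class is))"
    if "is \<in> idx_lists d" for "is"
  proof -
    have "(\<Sum>ks\<in>perm_class is. T i ks) * monomial x is = (\<Sum>ks\<in>perm_class is. T i ks * monomial x ks)"
      unfolding sum_distrib_right
      by (intro sum.cong refl arg_cong2[where f=times] monomial_mset_eq[symmetric])
        (simp_all add: perm_class_def)
    thus ?thesis using that by (simp add: symmetrize_def idx_lists_def)
  qed
  thus "tensor_map d (symmetrize d T) x $ i = tensor_map d T x $ i"
    by (simp add: tensor_map_component sum_perm_class_average cong: sum.cong)
qed

lemma hs_norm_symmetrize_le: "hs_norm d (symmetrize d T) \<le> hs_norm d T"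
proof -
  have entry:
    "(symmetrize d T i is)\<^sup>2 \<le> (\<Sum>ks\<in>perm_class is. (T i ks)\<^sup>2) / real (card (perm_class is))"
    if "is \<in> idx_lists d" for i "is"
  proof -
    have c: "real (card (perm_class is)) > 0" using card_perm_class_pos by simp
    have "(\<Sum>ks\<in>perm_class is. T i ks)\<^sup>2
        \<le> real (card (perm_class is)) * (\<Sum>ks\<in>perm_class is. (T i ks)\<^sup>2)"
      using Cauchy_Schwarz_ineq_sum[of "\<lambda>_. 1" "T i" "perm_class is"] by simp
    thus ?thesis
      using that c by (simp add: symmetrize_def idx_lists_def field_simps power2_eq_square)
  qed
  have row: "(\<Sum>is\<in>idx_lists d. (symmetrize d T i is)\<^sup>2) \<le> (\<Sum>is\<in>idx_lists d. (T i is)\<^sup>2)" for i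
  proof -
    have "(\<Sum>is\<in>idx_lists d. (symmetrize d T i is)\<^sup>2)
        \<le> (\<Sum>is\<in>idx_lists d. (\<Sum>ks\<in>perm_class is. (T i ks)\<^sup>2) / real (card (perm_class is)))"
      by (rule sum_mono) (rule entry)
    also have "\<dots> = (\<Sum>is\<in>idx_lists d. (T i is)\<^sup>2)"
      by (rule sum_perm_class_average)
    finally show ?thesis .
  qed
  show ?thesis unfolding hs_norm_def by (rule real_sqrt_le_mono, rule sum_mono, rule row)
qed

section \<open>A symmetric tensor is determined by its polynomial map\<close>

lemma sym_tensor_length: "sym_tensor d T \<Longrightarrow> length is \<noteq> d \<Longrightarrow> T i is = 0"
  and sym_tensor_mset: "sym_tensor d T \<Longrightarrow> mset is = mset js \<Longrightarrow> T i is = T i js"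
  unfolding sym_tensor_def by blast+

lemma base_expansion_unique:
  fixes c c' :: "nat \<Rightarrow> nat"
  assumes "\<And>k. c k < B" "\<And>k. c' k < B" "(\<Sum>k<N. c k * B ^ k) = (\<Sum>k<N. c' k * B ^ k)" "k < N"
  shows "c k = c' k"
  using assms
proof (induction N arbitrary: c c' k)
  case (Suc N)
  have split: "(\<Sum>k<Suc N. c k * B ^ k) = c 0 + B * (\<Sum>k<N. c (Suc k) * B ^ k)" for c :: "nat \<Rightarrow> nat"
    by (simp add: sum.lessThan_Suc_shift sum_distrib_left mult.assoc mult.left_commute
        del: sum.lessThan_Suc)
  have eq: "c 0 + B * (\<Sum>k<N. c (Suc k) * B ^ k) = c' 0 + B * (\<Sum>k<N. c' (Suc k) * B ^ k)"
    using Suc.prems(3) split[of c] split[of c'] by simp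
  have c0: "c 0 = c' 0"
  proof -
    have "(c 0 + B * (\<Sum>k<N. c (Suc k) * B ^ k)) mod B = c 0"
      "(c' 0 + B * (\<Sum>k<N. c' (Suc k) * B ^ k)) mod B = c' 0"
      using Suc.prems(1,2) by simp_all
    thus ?thesis using eq by simp
  qed
  moreover have "B > 0" using Suc.prems(1) by (metis not_less0 not_gr_zero)
  ultimately have rest: "(\<Sum>k<N. c (Suc k) * B ^ k) = (\<Sum>k<N. c' (Suc k) * B ^ k)"
    using eq by simp
  show ?case
  proof (cases k)
    case (Suc k')
    thus ?thesis using Suc.IH[of "\<lambda>k. c (Suc k)" "\<lambda>k. c' (Suc k)" k'] Suc.prems rest by simp
  qed (use c0 in simp)
qed simp

lemma sum_list_eq_sum_count: "(\<Sum>a\<leftarrow>is. w a) = (\<Sum>a\<in>(UNIV::('n::finite) set). count (mset is) a * w a)"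
  by (simp add: sum_list_map_eq_sum_count2[of "is" UNIV] count_mset)

text \<open>With an injective labelling \<open>g\<close> of the indices, the weight \<open>(d + 1) ^ g a\<close> makes
  \<open>\<Sum>a\<leftarrow>is. (d + 1) ^ g a\<close> the base-\<open>(d + 1)\<close> expansion of the multiplicities in \<open>is\<close>.\<close>

lemma mset_eq_if_sum_list_weights_eq:
  fixes "is" ks :: "('n::finite) list" and g :: "'n \<Rightarrow> nat"
  assumes len: "length is = d" "length ks = d" and g: "inj g"
    and eq: "(\<Sum>a\<leftarrow>is. Suc d ^ g a) = (\<Sum>a\<leftarrow>ks. Suc d ^ g a)"
  shows "mset is = mset ks"
proof -
  define M where "M = Suc (Max (range g))"
  have gM: "g a < M" for a unfolding M_def by (simp add: le_imp_less_Suc)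
  define c where "c xs k = (\<Sum>a\<in>{a\<in>UNIV. g a = k}. count (mset xs) a)" for xs :: "'n list" and k
  have expansion: "(\<Sum>a\<leftarrow>xs. Suc d ^ g a) = (\<Sum>k<M. c xs k * Suc d ^ k)" for xs
  proof -
    have "(\<Sum>a\<leftarrow>xs. Suc d ^ g a) = (\<Sum>k\<in>{..<M}. \<Sum>a\<in>{a\<in>UNIV. g a = k}. count (mset xs) a * Suc d ^ g a)"
      unfolding sum_list_eq_sum_count by (rule sum.group[symmetric]) (auto simp: gM)
    also have "\<dots> = (\<Sum>k<M. c xs k * Suc d ^ k)"
      unfolding c_def sum_distrib_right by (intro sum.cong refl) auto
    finally show ?thesis .
  qed
  have digit: "c xs k < Suc d" if "length xs = d" for xs k
  proof -
    have "c xs k \<le> (\<Sum>a\<in>UNIV. count (mset xs) a)" unfolding c_def by (intro sum_mono2) auto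
    also have "\<dots> = length xs"
      using sum_list_eq_sum_count[of "\<lambda>_. 1" xs] by (simp add: sum_list_triv)
    finally show ?thesis using that by simp
  qed
  have c_eq: "c is k = c ks k" if "k < M" for k
    using base_expansion_unique[of "c is" "Suc d" "c ks" M k] digit len eq expansion that by auto
  have "c xs (g a) = count (mset xs) a" for xs a
  proof -
    have "{a'\<in>UNIV. g a' = g a} = {a}" using g by (auto simp: inj_def)
    thus ?thesis by (simp add: c_def)
  qed
  thus ?thesis using c_eq gM by (metis multiset_eqI)
qed

lemma sum_list_weights_level_set:
  fixes "is" :: "('n::finite) list" and g :: "'n \<Rightarrow> nat"
  assumes len: "length is = d" and g: "inj g"
  shows "{ks. ks \<in> idx_lists d \<and> (\<Sum>a\<leftarrow>ks. Suc d ^ g a) = (\<Sum>a\<leftarrow>is. Suc d ^ g a)} = perm_class is"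
proof (intro set_eqI iffI)
  fix ks assume "ks \<in> {ks. ks \<in> idx_lists d \<and> (\<Sum>a\<leftarrow>ks. Suc d ^ g a) = (\<Sum>a\<leftarrow>is. Suc d ^ g a)}"
  thus "ks \<in> perm_class is"
    using mset_eq_if_sum_list_weights_eq[OF _ len g] by (simp add: perm_class_def idx_lists_def)
next
  fix ks assume "ks \<in> perm_class is"
  hence m: "mset ks = mset is" by (simp add: perm_class_def)
  hence "(\<Sum>a\<leftarrow>ks. Suc d ^ g a) = (\<Sum>a\<leftarrow>is. Suc d ^ g a)"
    by (metis mset_map sum_mset_sum_list)
  thus "ks \<in> {ks. ks \<in> idx_lists d \<and> (\<Sum>a\<leftarrow>ks. Suc d ^ g a) = (\<Sum>a\<leftarrow>is. Suc d ^ g a)}"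
    using m len mset_eq_length by (fastforce simp: idx_lists_def)
qed

lemma tensor_map_powers_component:
  "tensor_map d T (\<chi> a. t ^ w a) $ i = (\<Sum>ks\<in>idx_lists d. T i ks * t ^ (\<Sum>a\<leftarrow>ks. w a))"
  by (simp add: tensor_map_component monomial_powers)

text \<open>Evaluating at \<open>x = (t ^ (d + 1) ^ g a)\<^sub>a\<close> turns a component of the map into a
  univariate polynomial in \<open>t\<close> whose coefficients are sums of the tensor over permutation classes.\<close>

lemma sym_tensor_eq_zero_if_map_eq_zero:
  fixes T :: "('n::finite) ptensor"
  assumes sym: "sym_tensor d T" and zero: "\<And>x. tensor_map d T x = 0"
  shows "T = (\<lambda>_ _. 0)"
proof (intro ext)
  fix i and "is" :: "'n list"
  show "T i is = 0"
  proof (cases "length is = d")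
    case False thus ?thesis using sym by (simp add: sym_tensor_length)
  next
    case True
    obtain g :: "'n \<Rightarrow> nat" where g: "inj g"
      using countable_finite[of "UNIV::'n set"] by (auto simp: countable_def)
    define e where "e xs = (\<Sum>a\<leftarrow>xs. Suc d ^ g a)" for xs
    define N where "N = Max (e ` idx_lists d)"
    have eN: "e ` idx_lists d \<subseteq> {..N}" unfolding N_def by auto
    define coeff where "coeff m = (\<Sum>ks | ks \<in> idx_lists d \<and> e ks = m. T i ks)" for m
    have "(\<Sum>m\<le>N. coeff m * t ^ m) = 0" for t :: real
    proof -
      have "(\<Sum>m\<le>N. coeff m * t ^ m)
          = (\<Sum>m\<le>N. \<Sum>ks | ks \<in> idx_lists d \<and> e ks = m. T i ks * t ^ e ks)"
        unfolding coeff_def sum_distrib_right by (intro sum.cong refl) auto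
      also have "\<dots> = (\<Sum>ks\<in>idx_lists d. T i ks * t ^ e ks)"
        by (rule sum.group) (use eN in auto)
      also have "\<dots> = tensor_map d T (\<chi> a. t ^ (Suc d ^ g a)) $ i"
        unfolding tensor_map_powers_component e_def ..
      finally show ?thesis using zero by simp
    qed
    moreover have "e is \<le> N" using eN True by (auto simp: idx_lists_def)
    ultimately have "coeff (e is) = 0" using polyfun_eq_0[of coeff N] by blast
    moreover have "{ks. ks \<in> idx_lists d \<and> e ks = e is} = perm_class is"
      unfolding e_def by (rule sum_list_weights_level_set[OF True g])
    moreover have "(\<Sum>ks\<in>perm_class is. T i ks) = (\<Sum>ks\<in>perm_class is. T i is)"
      by (intro sum.cong refl sym_tensor_mset[OF sym]) (simp add: perm_class_def)
    ultimately show ?thesis using card_perm_class_pos[of "is"]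
      by (simp add: coeff_def card_gt_0_iff)
  qed
qed

lemma sym_tensor_eq_if_map_eq:
  assumes T: "sym_tensor d T" and U: "sym_tensor d U" and eq: "tensor_map d T = tensor_map d U"
  shows "T = U"
proof -
  have "sym_tensor d (\<lambda>i is. T i is - U i is)"
    unfolding sym_tensor_def
  proof (intro conjI allI impI)
    fix i "is" js assume "mset is = mset (js::'a list)"
    thus "T i is - U i is = T i js - U i js"
      using sym_tensor_mset[OF T] sym_tensor_mset[OF U] by metis
  qed (simp add: sym_tensor_length[OF T] sym_tensor_length[OF U])
  moreover have "tensor_map d (\<lambda>i is. T i is - U i is) x = 0" for x
    using fun_cong[OF eq, of x]
    by (simp add: vec_eq_iff tensor_map_component left_diff_distrib sum_subtractf)
  ultimately have "(\<lambda>i is. T i is - U i is) = (\<lambda>_ _. 0)"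
    by (rule sym_tensor_eq_zero_if_map_eq_zero)
  hence "T i is - U i is = 0" for i "is" by (simp add: fun_eq_iff)
  thus ?thesis by (intro ext) simp
qed

section \<open>Composition and iterates\<close>

text \<open>The composition before symmetrization: the \<open>t\<close>-th argument of \<open>G\<close> is fed by \<open>F\<close>
  evaluated on the \<open>t\<close>-th chunk of indices.\<close>

definition compose_tensor :: "nat \<Rightarrow> nat \<Rightarrow> ('n::finite) ptensor \<Rightarrow> 'n ptensor \<Rightarrow> 'n ptensor" where
  "compose_tensor q r G F i is =
     (if length is = q * r
      then (\<Sum>js\<in>idx_lists q. G i js * (\<Prod>t<q. F (js ! t) (chunk r t is))) else 0)"

lemma tensor_map_compose_tensor:
  fixes G F :: "('n::finite) ptensor"
  shows "tensor_map (q * r) (compose_tensor q r G F) x = tensor_map q G (tensor_map r F x)"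
proof (intro iffD2[OF vec_eq_iff] allI)
  fix i
  have "compose_tensor q r G F i is * monomial x is
      = (\<Sum>js\<in>idx_lists q. G i js * (\<Prod>t<q. F (js ! t) (chunk r t is) * monomial x (chunk r t is)))"
    if "is \<in> idx_lists (q * r)" for "is"
    using that monomial_chunks[of "is" q r x]
    by (simp add: compose_tensor_def idx_lists_def sum_distrib_right prod.distrib mult.assoc)
  hence "tensor_map (q * r) (compose_tensor q r G F) x $ i
      = (\<Sum>js\<in>idx_lists q. G i js *
           (\<Sum>is\<in>idx_lists (q * r). \<Prod>t<q. F (js ! t) (chunk r t is) * monomial x (chunk r t is)))"
    by (simp add: tensor_map_component sum_distrib_left sum.swap[of _ "idx_lists q"] cong: sum.cong)
  also have "\<dots> = (\<Sum>js\<in>idx_lists q. G i js * (\<Prod>t<q. tensor_map r F x $ (js ! t)))"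
    using sum_idx_lists_chunks[where h="\<lambda>t c. F (_ ! t) c * monomial x c"]
    by (simp add: tensor_map_component)
  also have "\<dots> = tensor_map q G (tensor_map r F x) $ i"
    by (simp add: tensor_map_def)
  finally show "tensor_map (q * r) (compose_tensor q r G F) x $ i
      = tensor_map q G (tensor_map r F x) $ i" .
qed

definition id_tensor :: "('n::finite) ptensor" where
  "id_tensor i is = (if is = [i] then 1 else 0)"

lemma sym_tensor_id_tensor: "sym_tensor 1 id_tensor"
  unfolding sym_tensor_def id_tensor_def by (auto simp: length_Suc_conv)

lemma tensor_map_id_tensor: "tensor_map 1 id_tensor = id"
proof (intro ext iffD2[OF vec_eq_iff] allI)
  fix x :: "real^'n" and i
  have "tensor_map 1 id_tensor x $ i = (\<Sum>a\<in>UNIV. id_tensor i [a] * x $ a)"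
    unfolding tensor_map_component by (simp add: sum_idx_lists_Suc[where d=0, simplified])
  also have "\<dots> = (\<Sum>a\<in>UNIV. if a = i then x $ a else 0)"
    by (intro sum.cong) (auto simp: id_tensor_def)
  finally show "tensor_map 1 id_tensor x $ i = id x $ i" by simp
qed

lemma titer_exists:
  "\<exists>h. sym_tensor (p ^ k) h \<and> tensor_map (p ^ k) h = (tensor_map p (f::('n::finite) ptensor) ^^ k)"
proof (induction k)
  case 0
  thus ?case using sym_tensor_id_tensor tensor_map_id_tensor by (auto simp: id_def)
next
  case (Suc k)
  then obtain h where h: "sym_tensor (p ^ k) h" "tensor_map (p ^ k) h = (tensor_map p f ^^ k)"
    by blast
  let ?h = "symmetrize (p ^ k * p) (compose_tensor (p ^ k) p h f)"
  have "tensor_map (p ^ k * p) ?h = (tensor_map p f ^^ Suc k)"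
    unfolding tensor_map_symmetrize
    by (rule ext) (simp add: tensor_map_compose_tensor h(2) funpow_swap1)
  thus ?case using sym_tensor_symmetrize by (metis power_Suc2)
qed

lemma sym_tensor_titer: "sym_tensor (p ^ k) (titer p f k)"
  and tensor_map_titer: "tensor_map (p ^ k) (titer p f k) = (tensor_map p f ^^ k)"
proof -
  have "\<exists>!h. sym_tensor (p ^ k) h \<and> tensor_map (p ^ k) h = (tensor_map p f ^^ k)"
    using titer_exists sym_tensor_eq_if_map_eq by metis
  hence "sym_tensor (p ^ k) (titer p f k) \<and>
      tensor_map (p ^ k) (titer p f k) = (tensor_map p f ^^ k)"
    unfolding titer_def by (rule theI')
  thus "sym_tensor (p ^ k) (titer p f k)" "tensor_map (p ^ k) (titer p f k) = (tensor_map p f ^^ k)"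
    by simp_all
qed

lemma titer_1: "sym_tensor p f \<Longrightarrow> titer p f 1 = f"
  using sym_tensor_titer[of p 1 f] tensor_map_titer[of p 1 f] by (simp add: sym_tensor_eq_if_map_eq)

lemma titer_add:
  "titer p f (k + l)
     = symmetrize (p ^ k * p ^ l) (compose_tensor (p ^ k) (p ^ l) (titer p f k) (titer p f l))"
proof (rule sym_tensor_eq_if_map_eq)
  show "sym_tensor (p ^ (k + l)) (titer p f (k + l))"
    by (rule sym_tensor_titer)
  show "sym_tensor (p ^ (k + l))
      (symmetrize (p ^ k * p ^ l) (compose_tensor (p ^ k) (p ^ l) (titer p f k) (titer p f l)))"
    using sym_tensor_symmetrize by (simp add: power_add)
  show "tensor_map (p ^ (k + l)) (titer p f (k + l))
      = tensor_map (p ^ (k + l))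
          (symmetrize (p ^ k * p ^ l) (compose_tensor (p ^ k) (p ^ l) (titer p f k) (titer p f l)))"
    unfolding power_add tensor_map_symmetrize
    by (rule ext) (simp add: tensor_map_compose_tensor tensor_map_titer
        tensor_map_titer[of p "k + l" f, unfolded power_add] funpow_add)
qed

lemma hs_norm_nonneg: "hs_norm d T \<ge> 0"
  unfolding hs_norm_def by (intro real_sqrt_ge_zero sum_nonneg) simp

lemma hs_norm_sq: "(hs_norm d T)\<^sup>2 = (\<Sum>i\<in>UNIV. \<Sum>is\<in>idx_lists d. (T i is)\<^sup>2)"
  unfolding hs_norm_def by (rule real_sqrt_pow2) (intro sum_nonneg, simp)

lemma sum_sq_compose_tensor_entry:
  fixes F :: "('n::finite) ptensor"
  shows "(\<Sum>is\<in>idx_lists (q * r). (\<Prod>t<q. F (js ! t) (chunk r t is))\<^sup>2)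
     = (\<Prod>t<q. \<Sum>c\<in>idx_lists r. (F (js ! t) c)\<^sup>2)"
  unfolding power2_eq_square prod.distrib[symmetric]
  by (rule sum_idx_lists_chunks[where h="\<lambda>t c. F (js ! t) c * F (js ! t) c"])

text \<open>Cauchy-Schwarz in the summation over \<open>js\<close> for each output entry.\<close>

lemma hs_norm_compose_tensor_le:
  fixes G F :: "('n::finite) ptensor"
  shows "hs_norm (q * r) (compose_tensor q r G F) \<le> hs_norm q G * hs_norm r F ^ q"
proof (rule power2_le_imp_le)
  define P where "P js is = (\<Prod>t<q. F (js ! t) (chunk r t is))" for js "is" :: "'n list"
  have "(hs_norm (q * r) (compose_tensor q r G F))\<^sup>2
      = (\<Sum>i\<in>UNIV. \<Sum>is\<in>idx_lists (q * r). (\<Sum>js\<in>idx_lists q. G i js * P js is)\<^sup>2)"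
    unfolding hs_norm_sq by (intro sum.cong refl) (simp add: compose_tensor_def P_def idx_lists_def)
  also have "\<dots> \<le> (\<Sum>i\<in>UNIV. \<Sum>is\<in>idx_lists (q * r).
                    (\<Sum>js\<in>idx_lists q. (G i js)\<^sup>2) * (\<Sum>js\<in>idx_lists q. (P js is)\<^sup>2))"
    by (intro sum_mono Cauchy_Schwarz_ineq_sum)
  also have "\<dots> = (\<Sum>i\<in>UNIV. (\<Sum>js\<in>idx_lists q. (G i js)\<^sup>2) *
                  (\<Sum>js\<in>idx_lists q. \<Sum>is\<in>idx_lists (q * r). (P js is)\<^sup>2))"
    by (simp only: sum_distrib_left sum.swap[where A="idx_lists (q * r)" and B="idx_lists q"])
  also have "(\<Sum>js\<in>idx_lists q. \<Sum>is\<in>idx_lists (q * r). (P js is)\<^sup>2)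
      = (\<Sum>js\<in>idx_lists q. \<Prod>t<q. \<Sum>c\<in>idx_lists r. (F (js ! t) c)\<^sup>2)"
    unfolding P_def sum_sq_compose_tensor_entry ..
  also have "\<dots> = ((hs_norm r F)\<^sup>2) ^ q"
    by (simp add: sum_idx_lists_prod[where g="\<lambda>t a. \<Sum>c\<in>idx_lists r. (F a c)\<^sup>2"] hs_norm_sq)
  also have "(\<Sum>i\<in>UNIV. (\<Sum>js\<in>idx_lists q. (G i js)\<^sup>2) * ((hs_norm r F)\<^sup>2) ^ q)
      = (hs_norm q G)\<^sup>2 * ((hs_norm r F)\<^sup>2) ^ q"
    by (simp only: sum_distrib_right[symmetric] hs_norm_sq)
  also have "\<dots> = (hs_norm q G * hs_norm r F ^ q)\<^sup>2"
    by (simp add: power_mult_distrib power_mult[symmetric] mult.commute)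
  finally show "(hs_norm (q * r) (compose_tensor q r G F))\<^sup>2 \<le> (hs_norm q G * hs_norm r F ^ q)\<^sup>2" .
qed (intro mult_nonneg_nonneg zero_le_power hs_norm_nonneg)

lemma hs_norm_titer_add_le:
  "hs_norm (p ^ (k + l)) (titer p f (k + l))
     \<le> hs_norm (p ^ k) (titer p f k) * hs_norm (p ^ l) (titer p f l) ^ p ^ k"
proof -
  have "hs_norm (p ^ (k + l)) (titer p f (k + l))
      \<le> hs_norm (p ^ k * p ^ l) (compose_tensor (p ^ k) (p ^ l) (titer p f k) (titer p f l))"
    unfolding titer_add power_add by (rule hs_norm_symmetrize_le)
  also have "\<dots> \<le> hs_norm (p ^ k) (titer p f k) * hs_norm (p ^ l) (titer p f l) ^ p ^ k"
    by (rule hs_norm_compose_tensor_le)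
  finally show ?thesis .
qed

section \<open>Symmetric multilinear forms attain their norm on the diagonal\<close>

definition multilinear_form :: "nat \<Rightarrow> ('n::finite list \<Rightarrow> real) \<Rightarrow> (nat \<Rightarrow> real^'n) \<Rightarrow> real" where
  "multilinear_form d S xs = (\<Sum>is\<in>idx_lists d. S is * (\<Prod>j<d. xs j $ (is ! j)))"

lemma multilinear_form_cong:
  "(\<And>j. j < d \<Longrightarrow> xs j = ys j) \<Longrightarrow> multilinear_form d S xs = multilinear_form d S ys"
  unfolding multilinear_form_def by (intro sum.cong refl arg_cong2[where f=times] prod.cong) auto

lemma continuous_on_multilinear_form: "continuous_on UNIV (multilinear_form d S)"
  unfolding multilinear_form_def
  by (intro continuous_intros continuous_on_component continuous_on_product_coordinates)

lemma multilinear_form_const_scaleR: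
  "multilinear_form d S (\<lambda>j. s j *\<^sub>R x) = (\<Prod>j<d. s j) * multilinear_form d S (\<lambda>_. x)"
  unfolding multilinear_form_def sum_distrib_left by (intro sum.cong refl) (simp add: prod.distrib)

lemma linear_multilinear_form_slot:
  assumes "c < d"
  shows "linear (\<lambda>a. multilinear_form d S (xs(c := a)))"
proof -
  have split: "multilinear_form d S (xs(c := a))
      = (\<Sum>is\<in>idx_lists d. S is * (a $ (is ! c) * (\<Prod>j\<in>{..<d} - {c}. xs j $ (is ! j))))" for a
    unfolding multilinear_form_def
  proof (intro sum.cong refl arg_cong2[where f=times])
    fix "is" :: "'a list"
    have "(\<Prod>j<d. (xs(c := a)) j $ (is ! j))
        = (xs(c := a)) c $ (is ! c) * (\<Prod>j\<in>{..<d} - {c}. (xs(c := a)) j $ (is ! j))"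
      using assms by (intro prod.remove) auto
    thus "(\<Prod>j<d. (xs(c := a)) j $ (is ! j)) = a $ (is ! c) * (\<Prod>j\<in>{..<d} - {c}. xs j $ (is ! j))"
      by simp
  qed
  show ?thesis
    by (rule linearI) (simp_all add: split algebra_simps sum.distrib sum_distrib_left)
qed

lemma multilinear_form_permute:
  assumes S: "\<And>is js. mset is = mset js \<Longrightarrow> S is = S js" and \<sigma>: "\<sigma> permutes {..<d}"
  shows "multilinear_form d S (xs \<circ> \<sigma>) = multilinear_form d S xs"
proof -
  have inverse: "permute_list \<sigma> (permute_list (inv \<sigma>) ks) = ks"
    "permute_list (inv \<sigma>) (permute_list \<sigma> ks) = ks" if "ks \<in> idx_lists d" for ks :: "'a list"
  proof -
    have \<sigma>': "\<sigma> permutes {..<length ks}" using \<sigma> that by (simp add: idx_lists_def)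
    show "permute_list \<sigma> (permute_list (inv \<sigma>) ks) = ks"
      using permute_list_compose[OF \<sigma>', of "inv \<sigma>"] permutes_inv_o(2)[OF \<sigma>'] by simp
    show "permute_list (inv \<sigma>) (permute_list \<sigma> ks) = ks"
      using permute_list_compose[OF permutes_inv[OF \<sigma>'], of \<sigma>] permutes_inv_o(1)[OF \<sigma>'] by simp
  qed
  have "multilinear_form d S (xs \<circ> \<sigma>)
      = (\<Sum>ks\<in>idx_lists d. S (permute_list \<sigma> ks) * (\<Prod>j<d. xs (\<sigma> j) $ (permute_list \<sigma> ks ! j)))"
    unfolding multilinear_form_def
    by (rule sum.reindex_bij_witness[where i="permute_list \<sigma>" and j="permute_list (inv \<sigma>)"])
      (auto simp: inverse idx_lists_def)
  also have "\<dots> = (\<Sum>ks\<in>idx_lists d. S ks * (\<Prod>j<d. xs (\<sigma> j) $ (ks ! \<sigma> j)))"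
  proof (intro sum.cong refl arg_cong2[where f=times])
    fix ks :: "'a list" assume "ks \<in> idx_lists d"
    hence \<sigma>': "\<sigma> permutes {..<length ks}" and len: "length ks = d"
      using \<sigma> by (auto simp: idx_lists_def)
    show "S (permute_list \<sigma> ks) = S ks" using S mset_permute_list[OF \<sigma>'] by blast
    show "(\<Prod>j<d. xs (\<sigma> j) $ (permute_list \<sigma> ks ! j)) = (\<Prod>j<d. xs (\<sigma> j) $ (ks ! \<sigma> j))"
      using permute_list_nth[OF \<sigma>'] len by (intro prod.cong) auto
  qed
  also have "\<dots> = multilinear_form d S xs"
    unfolding multilinear_form_def
    using prod.permute[OF \<sigma>, where g="\<lambda>j. xs j $ (_ ! j)"] by (simp add: comp_def)
  finally show ?thesis .
qed

lemma bilinear_multilinear_form_slots: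
  assumes "c < d" "e < d" "c \<noteq> e"
  shows "bilinear (\<lambda>a b. multilinear_form d S (xs(c := a, e := b)))"
  unfolding bilinear_def
proof (intro conjI allI)
  fix a
  show "linear (\<lambda>b. multilinear_form d S (xs(c := a, e := b)))"
    using linear_multilinear_form_slot[OF assms(2), of S "xs(c := a)"] .
next
  fix b
  show "linear (\<lambda>a. multilinear_form d S (xs(c := a, e := b)))"
    using linear_multilinear_form_slot[OF assms(1), of S "xs(e := b)"]
    by (simp add: fun_upd_twist[OF assms(3)])
qed

lemma multilinear_form_slots_commute:
  assumes S: "\<And>is js. mset is = mset js \<Longrightarrow> S is = S js" and "c < d" "e < d" "c \<noteq> e"
  shows "multilinear_form d S (xs(c := a, e := b)) = multilinear_form d S (xs(c := b, e := a))"
proof -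
  have "xs(c := b, e := a) = xs(c := a, e := b) \<circ> Transposition.transpose c e"
    using assms(4) by (auto simp: fun_eq_iff Transposition.transpose_def)
  moreover have "multilinear_form d S (xs(c := a, e := b) \<circ> Transposition.transpose c e)
      = multilinear_form d S (xs(c := a, e := b))"
    by (rule multilinear_form_permute[OF S permutes_swap_id]) (use assms(2,3) in auto)
  ultimately show ?thesis by simp
qed

lemma symmetric_bilinear_polarization:
  assumes "bilinear B" "\<And>a b. B a b = B b a"
  shows "B (u + v) (u + v) - B (u - v) (u - v) = 4 * (B u v :: real)"
  using assms(2)[of v u]
  by (simp add: bilinear_ladd[OF assms(1)] bilinear_radd[OF assms(1)]
      bilinear_lsub[OF assms(1)] bilinear_rsub[OF assms(1)])

lemma bilinear_diag_scaleR: "bilinear B \<Longrightarrow> B (r *\<^sub>R w) (r *\<^sub>R w) = r\<^sup>2 * (B w w :: real)"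
  by (simp add: bilinear_lmul bilinear_rmul power2_eq_square)

text \<open>The frame potential \<open>\<Sum>j j'. (x j \<bullet> x j')\<^sup>2\<close>, written as the squared norm of the sum
  of the rank-one matrices \<open>x j x j\<^sup>T\<close>.\<close>

definition outer_self :: "real^'n \<Rightarrow> real^'n^'n" where
  "outer_self x = (\<chi> k l. x $ k * x $ l)"

definition frame_potential :: "nat \<Rightarrow> (nat \<Rightarrow> real^'n) \<Rightarrow> real" where
  "frame_potential d xs = (\<Sum>j<d. outer_self (xs j)) \<bullet> (\<Sum>j<d. outer_self (xs j))"

lemma outer_self_scaleR: "outer_self (r *\<^sub>R x) = r\<^sup>2 *\<^sub>R outer_self x"
  by (simp add: outer_self_def vec_eq_iff power2_eq_square)

lemma outer_self_sgn: "outer_self (sgn z) = (1 / (norm z)\<^sup>2) *\<^sub>R outer_self z"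
  by (simp add: sgn_div_norm outer_self_scaleR power_inverse divide_inverse)

lemma outer_self_add_diff:
  "outer_self (u + v) + outer_self (u - v) = 2 *\<^sub>R outer_self u + 2 *\<^sub>R outer_self v"
  by (simp add: outer_self_def vec_eq_iff algebra_simps)

lemma inner_outer_self: "outer_self x \<bullet> outer_self y = (x \<bullet> y)\<^sup>2"
proof -
  have "outer_self x \<bullet> outer_self y = (\<Sum>k\<in>UNIV. \<Sum>l\<in>UNIV. (x $ k * y $ k) * (x $ l * y $ l))"
    by (simp add: outer_self_def inner_vec_def mult_ac)
  thus ?thesis by (simp add: sum_product[symmetric] inner_vec_def power2_eq_square)
qed

lemma continuous_on_frame_potential:
  "continuous_on UNIV (frame_potential d :: (nat \<Rightarrow> real^'n::finite) \<Rightarrow> real)"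
  unfolding frame_potential_def outer_self_def
  by (intro continuous_intros continuous_on_product_coordinates)

lemma sum_fun_upd:
  assumes "finite A" "c \<in> A"
  shows "(\<Sum>j\<in>A. h ((f(c := a)) j)) = (\<Sum>j\<in>A. h (f j)) - h (f c) + (h a :: 'b::ab_group_add)"
proof -
  have "(\<Sum>j\<in>A - {c}. h ((f(c := a)) j)) = (\<Sum>j\<in>A - {c}. h (f j))"
    by (intro sum.cong) auto
  thus ?thesis using assms by (simp add: sum.remove algebra_simps)
qed

lemma sum_outer_self_merge:
  fixes xs :: "nat \<Rightarrow> real^'n"
  assumes "c < d" "e < d" "c \<noteq> e"
  shows "(\<Sum>j<d. outer_self ((xs(c := w, e := w)) j))
    = (\<Sum>j<d. outer_self (xs j)) - outer_self (xs c) - outer_self (xs e) + 2 *\<^sub>R outer_self w"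
proof -
  have "(\<Sum>j<d. outer_self ((xs(c := w, e := w)) j))
      = (\<Sum>j<d. outer_self ((xs(c := w)) j)) - outer_self ((xs(c := w)) e) + outer_self w"
    using assms by (intro sum_fun_upd) auto
  also have "(\<Sum>j<d. outer_self ((xs(c := w)) j))
      = (\<Sum>j<d. outer_self (xs j)) - outer_self (xs c) + outer_self w"
    using assms by (intro sum_fun_upd) auto
  finally show ?thesis using assms(3) by (simp add: fun_upd_def scaleR_2 algebra_simps)
qed

lemma norm_add_diff_sq_unit:
  fixes u v :: "'a::real_inner"
  assumes "norm u = 1" "norm v = 1"
  shows "(norm (u + v))\<^sup>2 = 2 + 2 * (u \<bullet> v)" and "(norm (u - v))\<^sup>2 = 2 - 2 * (u \<bullet> v)"
proof -
  have "u \<bullet> u = 1" "v \<bullet> v = 1" using assms by (simp_all add: power2_norm_eq_inner[symmetric])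
  thus "(norm (u + v))\<^sup>2 = 2 + 2 * (u \<bullet> v)" "(norm (u - v))\<^sup>2 = 2 - 2 * (u \<bullet> v)"
    by (simp_all add: power2_norm_eq_inner inner_add_left inner_add_right
        inner_diff_left inner_diff_right inner_commute)
qed

text \<open>The merging step of the proof: two distinct unit slots \<open>u, v\<close> of a symmetric multilinear
  form are replaced by the same vector, either \<open>w\<^sub>1 = (u + v)/|u + v|\<close> or
  \<open>w\<^sub>2 = (u - v)/|u - v|\<close>. By polarization the form is an affine combination of the two merged
  values, while the weighted frame potential strictly increases.\<close>

lemma multilinear_form_merge:
  fixes xs :: "nat \<Rightarrow> real^'n::finite"
  assumes S: "\<And>is js. mset is = mset js \<Longrightarrow> S is = S js"
    and slots: "c < d" "e < d" "c \<noteq> e"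
    and unit: "norm (xs c) = 1" "norm (xs e) = 1" and not_par: "\<bar>xs c \<bullet> xs e\<bar> < 1"
  shows "multilinear_form d S xs
    = (1 + xs c \<bullet> xs e) / 2 *
        multilinear_form d S (xs(c := sgn (xs c + xs e), e := sgn (xs c + xs e)))
    - (1 - xs c \<bullet> xs e) / 2 *
        multilinear_form d S (xs(c := sgn (xs c - xs e), e := sgn (xs c - xs e)))"
proof -
  define B where "B a b = multilinear_form d S (xs(c := a, e := b))" for a b
  have B: "bilinear B" unfolding B_def by (rule bilinear_multilinear_form_slots[OF slots])
  have B_diag: "B z z = (norm z)\<^sup>2 * B (sgn z) (sgn z)" for z
  proof -
    have "norm z *\<^sub>R sgn z = z" by (cases "z = 0") (simp_all add: sgn_div_norm)
    thus ?thesis using bilinear_diag_scaleR[OF B, of "norm z" "sgn z"] by simp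
  qed
  have "4 * B (xs c) (xs e) = B (xs c + xs e) (xs c + xs e) - B (xs c - xs e) (xs c - xs e)"
    using symmetric_bilinear_polarization[OF B]
      multilinear_form_slots_commute[where S=S and xs=xs, OF S slots]
    by (simp add: B_def)
  also have "\<dots> = (2 + 2 * (xs c \<bullet> xs e)) * B (sgn (xs c + xs e)) (sgn (xs c + xs e))
      - (2 - 2 * (xs c \<bullet> xs e)) * B (sgn (xs c - xs e)) (sgn (xs c - xs e))"
    unfolding B_diag[of "xs c + xs e"] B_diag[of "xs c - xs e"] norm_add_diff_sq_unit[OF unit] ..
  finally show ?thesis by (simp add: B_def field_simps)
qed

lemma outer_self_sgn_mix:
  fixes u v :: "real^'n::finite"
  assumes unit: "norm u = 1" "norm v = 1" and not_par: "\<bar>u \<bullet> v\<bar> < 1"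
  shows "(1 + u \<bullet> v) *\<^sub>R outer_self (sgn (u + v)) + (1 - u \<bullet> v) *\<^sub>R outer_self (sgn (u - v))
    = outer_self u + outer_self v"
proof -
  have k: "-1 < u \<bullet> v" "u \<bullet> v < 1" using not_par by auto
  have half: "(1 + u \<bullet> v) * (1 / (2 + 2 * (u \<bullet> v))) = 1 / 2"
    "(1 - u \<bullet> v) * (1 / (2 - 2 * (u \<bullet> v))) = 1 / 2"
    using k by (simp_all add: field_simps)
  have "(1 + u \<bullet> v) *\<^sub>R outer_self (sgn (u + v)) + (1 - u \<bullet> v) *\<^sub>R outer_self (sgn (u - v))
      = (1 / 2) *\<^sub>R (outer_self (u + v) + outer_self (u - v))"
    unfolding outer_self_sgn norm_add_diff_sq_unit[OF unit] scaleR_scaleR half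
    by (simp add: scaleR_add_right)
  also have "\<dots> = outer_self u + outer_self v" by (simp add: outer_self_add_diff scaleR_add_right)
  finally show ?thesis .
qed

lemma frame_potential_merge:
  fixes xs :: "nat \<Rightarrow> real^'n::finite"
  assumes slots: "c < d" "e < d" "c \<noteq> e"
    and unit: "norm (xs c) = 1" "norm (xs e) = 1" and not_par: "\<bar>xs c \<bullet> xs e\<bar> < 1"
  shows "frame_potential d xs
    < (1 + xs c \<bullet> xs e) / 2 *
        frame_potential d (xs(c := sgn (xs c + xs e), e := sgn (xs c + xs e)))
    + (1 - xs c \<bullet> xs e) / 2 *
        frame_potential d (xs(c := sgn (xs c - xs e), e := sgn (xs c - xs e)))"
proof -
  define k where "k = xs c \<bullet> xs e"
  define w1 w2 where "w1 = sgn (xs c + xs e)" and "w2 = sgn (xs c - xs e)"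
  define R where "R = (\<Sum>j<d. outer_self (xs j)) - outer_self (xs c) - outer_self (xs e)"
  define A where "A = outer_self (xs c) + outer_self (xs e)"
  have k: "-1 < k" "k < 1" using not_par by (auto simp: k_def)
  have sq: "(norm (xs c + xs e))\<^sup>2 = 2 + 2 * k" "(norm (xs c - xs e))\<^sup>2 = 2 - 2 * k"
    using norm_add_diff_sq_unit[OF unit] by (simp_all add: k_def)
  have mix: "(1 + k) *\<^sub>R outer_self w1 + (1 - k) *\<^sub>R outer_self w2 = A"
    unfolding k_def w1_def w2_def A_def by (rule outer_self_sgn_mix[OF unit not_par])
  have "xs c + xs e \<noteq> 0" "xs c - xs e \<noteq> 0" using sq k by auto
  hence "w1 \<bullet> w1 = 1" "w2 \<bullet> w2 = 1"
    by (simp_all add: w1_def w2_def norm_sgn power2_norm_eq_inner[symmetric])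
  hence unit_w: "outer_self w1 \<bullet> outer_self w1 = 1" "outer_self w2 \<bullet> outer_self w2 = 1"
    by (simp_all add: inner_outer_self)
  have merged: "frame_potential d (xs(c := w, e := w))
      = R \<bullet> R + 4 * (R \<bullet> outer_self w) + 4 * (outer_self w \<bullet> outer_self w)" for w
    unfolding frame_potential_def sum_outer_self_merge[OF slots] R_def[symmetric]
    by (simp add: inner_add_left inner_add_right inner_commute)
  have "xs c \<bullet> xs c = 1" "xs e \<bullet> xs e = 1"
    using unit by (simp_all add: power2_norm_eq_inner[symmetric])
  hence AA: "A \<bullet> A = 2 + 2 * k\<^sup>2"
    by (simp add: A_def inner_add_left inner_add_right inner_outer_self inner_commute k_def)
  have "(\<Sum>j<d. outer_self (xs j)) = R + A" by (simp add: R_def A_def)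
  hence "frame_potential d xs = R \<bullet> R + 2 * (R \<bullet> A) + 2 + 2 * k\<^sup>2"
    using AA unfolding frame_potential_def
    by (simp add: inner_add_left inner_add_right inner_commute)
  also have "\<dots> < R \<bullet> R + 2 * (R \<bullet> A) + 4"
    using k by (simp add: abs_square_less_1)
  also have "\<dots> = (1 + k) / 2 * frame_potential d (xs(c := w1, e := w1))
                 + (1 - k) / 2 * frame_potential d (xs(c := w2, e := w2))"
    unfolding merged unit_w mix[symmetric]
    by (simp add: inner_add_right inner_diff_right field_simps)
  finally show ?thesis by (simp add: k_def w1_def w2_def)
qed

definition unit_tuples :: "nat \<Rightarrow> (nat \<Rightarrow> real^'n) set" where
  "unit_tuples d = {xs. (\<forall>j<d. norm (xs j) = 1) \<and> (\<forall>j\<ge>d. xs j = 0)}"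

lemma compact_unit_tuples: "compact (unit_tuples d :: (nat \<Rightarrow> real^'n::finite) set)"
proof -
  have "unit_tuples d = PiE UNIV (\<lambda>j. if j < d then sphere (0::real^'n) 1 else {0})"
    by (auto simp: unit_tuples_def PiE_iff not_less) (metis mem_sphere_0 not_le singletonD)+
  moreover have "compactin (product_topology (\<lambda>_. euclidean) UNIV)
      (PiE UNIV (\<lambda>j. if j < d then sphere (0::real^'n) 1 else {0}))"
    by (auto simp: compactin_PiE)
  ultimately show ?thesis by (simp add: euclidean_product_topology)
qed

lemma unit_tuples_fun_upd:
  "xs \<in> unit_tuples d \<Longrightarrow> c < d \<Longrightarrow> e < d \<Longrightarrow> norm w = 1 \<Longrightarrow> xs(c := w, e := w) \<in> unit_tuples d"
  by (auto simp: unit_tuples_def)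

lemma unit_tuples_restrict:
  "(\<And>j. j < d \<Longrightarrow> norm (xs j) = 1) \<Longrightarrow> (\<lambda>j. if j < d then xs j else 0) \<in> unit_tuples d"
  by (simp add: unit_tuples_def)

lemma convex_combination_ge_max_imp_eq:
  fixes M X Y a1 a2 :: real
  assumes "M \<le> a1 * X + a2 * Y" "X \<le> M" "Y \<le> M" "a1 > 0" "a2 > 0" "a1 + a2 = 1"
  shows "X = M \<and> Y = M"
proof -
  have "a1 * X \<le> a1 * M" "a2 * Y \<le> a2 * M" using assms by simp_all
  moreover have "M = a1 * M + a2 * M" using assms(6) by (metis distrib_right mult_1)
  ultimately have "a1 * X = a1 * M" "a2 * Y = a2 * M" using assms(1) by linarith+
  thus ?thesis using assms(4,5) by simp
qed

text \<open>Among the tuples on which \<open>|multilinear_form d S|\<close> is maximal, one maximizing the frame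
  potential has all its slots parallel: otherwise merging two slots would produce a maximizer
  of larger potential.\<close>

lemma potential_maximizer_slots_parallel:
  fixes x0 :: "nat \<Rightarrow> real^'n::finite"
  assumes S: "\<And>is js. mset is = mset js \<Longrightarrow> S is = S js"
    and x0: "x0 \<in> unit_tuples d"
    and max: "\<And>y. y \<in> unit_tuples d \<Longrightarrow> \<bar>multilinear_form d S y\<bar> \<le> \<bar>multilinear_form d S x0\<bar>"
    and pot: "\<And>y. y \<in> unit_tuples d \<Longrightarrow> \<bar>multilinear_form d S y\<bar> = \<bar>multilinear_form d S x0\<bar> \<Longrightarrow>
      frame_potential d y \<le> frame_potential d x0"
    and slots: "c < d" "e < d" "c \<noteq> e"
  shows "\<bar>x0 c \<bullet> x0 e\<bar> = 1"
proof (rule ccontr)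
  have unit: "norm (x0 c) = 1" "norm (x0 e) = 1" using x0 slots by (simp_all add: unit_tuples_def)
  assume "\<bar>x0 c \<bullet> x0 e\<bar> \<noteq> 1"
  moreover have "\<bar>x0 c \<bullet> x0 e\<bar> \<le> 1" using Cauchy_Schwarz_ineq2[of "x0 c" "x0 e"] unit by simp
  ultimately have not_par: "\<bar>x0 c \<bullet> x0 e\<bar> < 1" by simp
  define a1 a2 where "a1 = (1 + x0 c \<bullet> x0 e) / 2" and "a2 = (1 - x0 c \<bullet> x0 e) / 2"
  define y1 y2 where "y1 = x0(c := sgn (x0 c + x0 e), e := sgn (x0 c + x0 e))"
    and "y2 = x0(c := sgn (x0 c - x0 e), e := sgn (x0 c - x0 e))"
  have a: "a1 > 0" "a2 > 0" "a1 + a2 = 1" using not_par by (auto simp: a1_def a2_def field_simps)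
  have "x0 e \<bullet> x0 e = 1" using unit by (simp add: power2_norm_eq_inner[symmetric])
  hence "x0 c + x0 e \<noteq> 0" "x0 c - x0 e \<noteq> 0"
    using not_par by (auto simp: eq_neg_iff_add_eq_0[symmetric])
  hence y: "y1 \<in> unit_tuples d" "y2 \<in> unit_tuples d"
    unfolding y1_def y2_def using x0 slots by (auto intro!: unit_tuples_fun_upd simp: norm_sgn)
  define M X Y where "M = \<bar>multilinear_form d S x0\<bar>"
    and "X = \<bar>multilinear_form d S y1\<bar>" and "Y = \<bar>multilinear_form d S y2\<bar>"
  have "M = \<bar>a1 * multilinear_form d S y1 - a2 * multilinear_form d S y2\<bar>"
    using multilinear_form_merge[OF S slots unit not_par]
      by (simp add: M_def a1_def a2_def y1_def y2_def)
  also have "\<dots> \<le> \<bar>a1 * multilinear_form d S y1\<bar> + \<bar>a2 * multilinear_form d S y2\<bar>"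
    by (rule abs_triangle_ineq4)
  also have "\<dots> = a1 * X + a2 * Y"
    using a by (simp add: X_def Y_def abs_mult)
  finally have "X = M \<and> Y = M"
    using convex_combination_ge_max_imp_eq[OF _ _ _ a] max y by (simp add: M_def X_def Y_def)
  hence "frame_potential d y1 \<le> frame_potential d x0" "frame_potential d y2 \<le> frame_potential d x0"
    using pot y by (simp_all add: M_def X_def Y_def)
  hence "a1 * frame_potential d y1 + a2 * frame_potential d y2 \<le> frame_potential d x0"
    using a by (intro convex_bound_le) auto
  thus False
    using frame_potential_merge[OF slots unit not_par] by (simp add: a1_def a2_def y1_def y2_def)
qed

lemma exists_potential_maximizer:
  fixes S :: "('n::finite) list \<Rightarrow> real"
  obtains x0 :: "nat \<Rightarrow> real^'n" where "x0 \<in> unit_tuples d"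
    "\<And>y. y \<in> unit_tuples d \<Longrightarrow> \<bar>multilinear_form d S y\<bar> \<le> \<bar>multilinear_form d S x0\<bar>"
    "\<And>y. y \<in> unit_tuples d \<Longrightarrow> \<bar>multilinear_form d S y\<bar> = \<bar>multilinear_form d S x0\<bar> \<Longrightarrow>
      frame_potential d y \<le> frame_potential d x0"
proof -
  let ?F = "\<lambda>y. \<bar>multilinear_form d S y\<bar>"
  obtain e :: "real^'n" where "norm e = 1" using vector_choose_size[of 1] by auto
  hence ne: "(unit_tuples d :: (nat \<Rightarrow> real^'n) set) \<noteq> {}"
    using unit_tuples_restrict[of d "\<lambda>_. e"] by auto
  have cont: "continuous_on UNIV ?F"
    using continuous_on_multilinear_form by (intro continuous_intros)
  obtain xm where xm: "xm \<in> unit_tuples d" "\<And>y. y \<in> unit_tuples d \<Longrightarrow> ?F y \<le> ?F xm"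
    using continuous_attains_sup[OF compact_unit_tuples ne continuous_on_subset[OF cont]] by blast
  define M where "M = unit_tuples d \<inter> {y. ?F y = ?F xm}"
  have "compact M" unfolding M_def
    by (intro compact_Int_closed compact_unit_tuples closed_Collect_eq cont continuous_on_const)
  moreover have "M \<noteq> {}" using xm by (auto simp: M_def)
  ultimately obtain x0 where x0: "x0 \<in> M" "\<And>y. y \<in> M \<Longrightarrow> frame_potential d y \<le> frame_potential d x0"
    using continuous_attains_sup continuous_on_subset[OF continuous_on_frame_potential subset_UNIV]
    by metis
  thus ?thesis using that xm by (auto simp: M_def)
qed

lemma multilinear_form_parallel_slots:
  fixes x0 :: "nat \<Rightarrow> real^'n::finite"
  assumes x0: "x0 \<in> unit_tuples d" and "d > 0"
    and par: "\<And>j. j < d \<Longrightarrow> \<bar>x0 0 \<bullet> x0 j\<bar> = 1"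
  shows "\<bar>multilinear_form d S x0\<bar> = \<bar>multilinear_form d S (\<lambda>_. x0 0)\<bar>"
proof -
  define u where "u = x0 0"
  define s where "s j = (if x0 j = u then 1 else -1 :: real)" for j
  have u: "norm u = 1" using x0 \<open>d > 0\<close> by (simp add: unit_tuples_def u_def)
  have "x0 j = s j *\<^sub>R u" if "j < d" for j
  proof -
    have "norm (x0 j) = 1" using x0 that by (simp add: unit_tuples_def)
    hence "x0 j = u \<or> x0 j = - u"
      using norm_cauchy_schwarz_abs_eq[of u "x0 j"] par[OF that] u by (auto simp: u_def)
    thus ?thesis by (auto simp: s_def)
  qed
  hence "multilinear_form d S x0 = multilinear_form d S (\<lambda>j. s j *\<^sub>R u)"
    by (rule multilinear_form_cong)
  hence "\<bar>multilinear_form d S x0\<bar> = \<bar>\<Prod>j<d. s j\<bar> * \<bar>multilinear_form d S (\<lambda>_. u)\<bar>"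
    by (simp add: multilinear_form_const_scaleR abs_mult)
  also have "\<bar>\<Prod>j<d. s j\<bar> = 1" unfolding abs_prod by (intro prod.neutral) (simp add: s_def)
  finally show ?thesis by (simp add: u_def)
qed

theorem symmetric_multilinear_form_le_diagonal:
  fixes S :: "('n::finite) list \<Rightarrow> real" and xs :: "nat \<Rightarrow> real^'n"
  assumes S: "\<And>is js. mset is = mset js \<Longrightarrow> S is = S js"
    and diag: "\<And>x. norm x = 1 \<Longrightarrow> \<bar>multilinear_form d S (\<lambda>_. x)\<bar> \<le> \<mu>"
    and unit: "\<And>j. j < d \<Longrightarrow> norm (xs j) = 1"
  shows "\<bar>multilinear_form d S xs\<bar> \<le> \<mu>"
proof (cases "d = 0")
  case True
  obtain x :: "real^'n" where "norm x = 1" using vector_choose_size[of 1] by auto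
  thus ?thesis using diag multilinear_form_cong[of d xs "\<lambda>_. x"] True by simp
next
  case False
  obtain x0 where x0: "x0 \<in> unit_tuples d"
    and max: "\<And>y. y \<in> unit_tuples d \<Longrightarrow> \<bar>multilinear_form d S y\<bar> \<le> \<bar>multilinear_form d S x0\<bar>"
    and pot: "\<And>y. y \<in> unit_tuples d \<Longrightarrow> \<bar>multilinear_form d S y\<bar> = \<bar>multilinear_form d S x0\<bar> \<Longrightarrow>
      frame_potential d y \<le> frame_potential d x0"
    using exists_potential_maximizer[where d=d and S=S] by blast
  have "\<bar>x0 0 \<bullet> x0 j\<bar> = 1" if "j < d" for j
  proof (cases "j = 0")
    case True
    thus ?thesis using x0 False by (simp add: unit_tuples_def power2_norm_eq_inner[symmetric])
  next
    case False
    thus ?thesis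
      by (intro potential_maximizer_slots_parallel[where S=S, OF S x0 max pot]) (use that in auto)
  qed
  hence "\<bar>multilinear_form d S x0\<bar> \<le> \<mu>"
    using multilinear_form_parallel_slots[OF x0] diag x0 False by (simp add: unit_tuples_def)
  moreover have "multilinear_form d S xs = multilinear_form d S (\<lambda>j. if j < d then xs j else 0)"
    by (intro multilinear_form_cong) simp
  ultimately show ?thesis using max[OF unit_tuples_restrict[of d xs, OF unit]] by simp
qed

section \<open>The spectral norm of a symmetric tensor\<close>

lemma continuous_on_tensor_map: "continuous_on UNIV (tensor_map d T)"
  unfolding tensor_map_def by (intro continuous_intros)

lemma tensor_map_scaleR: "tensor_map d T (r *\<^sub>R x) = r ^ d *\<^sub>R tensor_map d T x"
  unfolding tensor_map_def by (simp add: vec_eq_iff prod.distrib sum_distrib_left mult_ac)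

lemma spec_norm_form_eq_multilinear_form:
  fixes T :: "('n::finite) ptensor"
  shows "(\<Sum>i\<in>UNIV. \<Sum>is\<in>idx_lists d. T i is * y $ i * (\<Prod>j<d. xs j $ (is ! j)))
    = multilinear_form d (\<lambda>is. \<Sum>i\<in>UNIV. y $ i * T i is) xs"
  unfolding multilinear_form_def sum_distrib_right by (subst sum.swap) (simp add: mult_ac)

lemma multilinear_form_diagonal_eq_inner:
  fixes T :: "('n::finite) ptensor"
  shows "multilinear_form d (\<lambda>is. \<Sum>i\<in>UNIV. y $ i * T i is) (\<lambda>_. x) = y \<bullet> tensor_map d T x"
  unfolding multilinear_form_def inner_vec_def tensor_map_def sum_distrib_right
  by (subst sum.swap) (simp add: sum_distrib_left mult_ac)

text \<open>By Banach's theorem the supremum defining the spectral norm is attained with all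
  \<open>x\<^sub>j\<close> equal, and then with \<open>y\<close> parallel to \<open>F(x)\<close>.\<close>

lemma spec_norm_eq_max_norm_tensor_map:
  fixes T :: "('n::finite) ptensor"
  assumes sym: "sym_tensor d T" and x0: "norm x0 = 1"
    and max: "\<And>x. norm x = 1 \<Longrightarrow> norm (tensor_map d T x) \<le> norm (tensor_map d T x0)"
  shows "spec_norm d T = norm (tensor_map d T x0)"
proof -
  define \<mu> where "\<mu> = norm (tensor_map d T x0)"
  define SP where "SP = {\<bar>\<Sum>i\<in>UNIV. \<Sum>is\<in>idx_lists d. T i is * y $ i * (\<Prod>j<d. xs j $ (is ! j))\<bar>
    | y xs. norm y = 1 \<and> (\<forall>j<d. norm (xs j) = 1)}"
  have upper: "v \<le> \<mu>" if v: "v \<in> SP" for v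
  proof -
    obtain y xs where v: "v = \<bar>multilinear_form d (\<lambda>is. \<Sum>i\<in>UNIV. y $ i * T i is) xs\<bar>"
      and y: "norm y = 1" and xs: "\<And>j. j < d \<Longrightarrow> norm (xs j) = 1"
      using v unfolding SP_def spec_norm_form_eq_multilinear_form by blast
    have diag: "\<bar>multilinear_form d (\<lambda>is. \<Sum>i\<in>UNIV. y $ i * T i is) (\<lambda>_. x)\<bar> \<le> \<mu>"
      if "norm x = 1" for x
    proof -
      have "\<bar>y \<bullet> tensor_map d T x\<bar> \<le> norm y * norm (tensor_map d T x)"
        by (rule Cauchy_Schwarz_ineq2)
      thus ?thesis using y max[OF that] by (simp add: multilinear_form_diagonal_eq_inner \<mu>_def)
    qed
    have "(\<Sum>i\<in>UNIV. y $ i * T i is) = (\<Sum>i\<in>UNIV. y $ i * T i js)" if "mset is = mset js" for "is" js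
      using sym_tensor_mset[OF sym that] by simp
    thus ?thesis unfolding v by (rule symmetric_multilinear_form_le_diagonal) (use diag xs in auto)
  qed
  obtain e :: "real^'n" where e: "norm e = 1" using vector_choose_size[of 1] by auto
  define y where "y = (if tensor_map d T x0 = 0 then e else sgn (tensor_map d T x0))"
  have "norm y = 1" using e by (simp add: y_def norm_sgn)
  moreover have "\<mu> = \<bar>y \<bullet> tensor_map d T x0\<bar>"
    by (simp add: y_def \<mu>_def sgn_div_norm power2_norm_eq_inner[symmetric] power2_eq_square)
  ultimately have "\<mu> \<in> SP"
    unfolding SP_def spec_norm_form_eq_multilinear_form
      multilinear_form_diagonal_eq_inner[symmetric]
    using x0 by blast
  hence "Sup SP = \<mu>" using upper by (intro antisym cSup_least cSup_upper) (auto simp: bdd_above_def)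
  thus ?thesis by (simp add: spec_norm_def SP_def \<mu>_def)
qed

lemma spec_norm_attained:
  fixes T :: "('n::finite) ptensor"
  assumes "sym_tensor d T"
  obtains x where "norm x = 1" "norm (tensor_map d T x) = spec_norm d T"
    "\<And>y. norm y = 1 \<Longrightarrow> norm (tensor_map d T y) \<le> spec_norm d T"
proof -
  have sphere: "compact (sphere (0::real^'n) 1)" "sphere (0::real^'n) 1 \<noteq> {}" by simp_all
  obtain x0 where "x0 \<in> sphere 0 1"
      "\<And>y. y \<in> sphere 0 1 \<Longrightarrow> norm (tensor_map d T y) \<le> norm (tensor_map d T x0)"
    using continuous_attains_sup[OF sphere continuous_on_subset[OF
          continuous_on_norm[OF continuous_on_tensor_map] subset_UNIV]]
    by blast
  thus ?thesis using that spec_norm_eq_max_norm_tensor_map[OF assms] by simp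
qed

lemma spec_norm_nonneg: "sym_tensor d (T::('n::finite) ptensor) \<Longrightarrow> spec_norm d T \<ge> 0"
  by (metis norm_ge_zero spec_norm_attained)

lemma norm_tensor_map_le_spec_norm:
  fixes T :: "('n::finite) ptensor"
  assumes "sym_tensor d T"
  shows "norm (tensor_map d T x) \<le> spec_norm d T * norm x ^ d"
proof -
  obtain e :: "real^'n" where e: "norm e = 1" using vector_choose_size[of 1] by auto
  define u where "u = (if x = 0 then e else sgn x)"
  have u: "norm u = 1" and x: "x = norm x *\<^sub>R u"
    using e by (simp_all add: u_def norm_sgn sgn_div_norm)
  have "norm (tensor_map d T x) = norm x ^ d * norm (tensor_map d T u)"
    by (subst x, simp only: tensor_map_scaleR) simp
  also have "\<dots> \<le> norm x ^ d * spec_norm d T"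
    using spec_norm_attained[OF assms] u by (intro mult_left_mono) auto
  finally show ?thesis by (simp add: mult.commute)
qed

lemma norm_tensor_map_le_hs_norm:
  fixes T :: "('n::finite) ptensor"
  shows "norm (tensor_map d T x) \<le> hs_norm d T * norm x ^ d"
proof (rule power2_le_imp_le)
  have "(norm (tensor_map d T x))\<^sup>2 = (\<Sum>i\<in>UNIV. (\<Sum>is\<in>idx_lists d. T i is * monomial x is)\<^sup>2)"
    unfolding power2_norm_eq_inner inner_vec_def tensor_map_component
      by (simp add: power2_eq_square)
  also have "\<dots> \<le> (\<Sum>i\<in>UNIV. (\<Sum>is\<in>idx_lists d. (T i is)\<^sup>2) * (\<Sum>is\<in>idx_lists d. (monomial x is)\<^sup>2))"
    by (intro sum_mono Cauchy_Schwarz_ineq_sum)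
  also have "(\<Sum>is\<in>idx_lists d. (monomial x is)\<^sup>2) = (\<Sum>is\<in>idx_lists d. \<Prod>j<d. (x $ (is ! j))\<^sup>2)"
    by (intro sum.cong refl)
      (simp add: prod_nth_eq_monomial[symmetric] idx_lists_def prod_power_distrib)
  also have "\<dots> = (\<Prod>j<d. \<Sum>a\<in>UNIV. (x $ a)\<^sup>2)" by (rule sum_idx_lists_prod)
  also have "\<dots> = ((norm x)\<^sup>2) ^ d"
    unfolding power2_norm_eq_inner inner_vec_def by (simp add: power2_eq_square)
  finally show "(norm (tensor_map d T x))\<^sup>2 \<le> (hs_norm d T * norm x ^ d)\<^sup>2"
    by (simp add: hs_norm_sq sum_distrib_left[symmetric] sum_distrib_right[symmetric]
        power_mult_distrib power_mult[symmetric] mult.commute)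
qed (intro mult_nonneg_nonneg hs_norm_nonneg zero_le_power norm_ge_zero)

lemma spec_norm_le_hs_norm: "sym_tensor d (T::('n::finite) ptensor) \<Longrightarrow> spec_norm d T \<le> hs_norm d T"
  by (metis mult.right_neutral norm_tensor_map_le_hs_norm power_one spec_norm_attained)

lemma spec_norm_eq_0_iff:
  fixes T :: "('n::finite) ptensor"
  assumes sym: "sym_tensor d T"
  shows "spec_norm d T = 0 \<longleftrightarrow> T = (\<lambda>_ _. 0)"
proof
  assume "spec_norm d T = 0"
  hence "tensor_map d T x = 0" for x using norm_tensor_map_le_spec_norm[OF sym, of x] by simp
  thus "T = (\<lambda>_ _. 0)" by (rule sym_tensor_eq_zero_if_map_eq_zero[OF sym])
next
  assume "T = (\<lambda>_ _. 0)"
  hence "tensor_map d T x = 0" for x by (simp add: tensor_map_def vec_eq_iff)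
  thus "spec_norm d T = 0" using spec_norm_attained[OF sym] by (metis norm_zero)
qed

section \<open>Sequences with \<open>a (k + l) \<le> a k * a l ^ p ^ k\<close>\<close>

lemma tendsto_Inf_if_eventually_below:
  fixes b :: "nat \<Rightarrow> real"
  assumes nonneg: "\<And>k. b k \<ge> 0"
    and below: "\<And>m. m \<ge> 1 \<Longrightarrow> \<exists>B. B \<longlonglongrightarrow> b m \<and> eventually (\<lambda>k. b k \<le> B k) sequentially"
  shows "b \<longlonglongrightarrow> Inf (b ` {1..})"
proof (rule tendstoI)
  fix \<epsilon> :: real assume "\<epsilon> > 0"
  define L where "L = Inf (b ` {1..})"
  have bdd: "bdd_below (b ` {1..})" using nonneg by (auto simp: bdd_below_def)
  obtain m where m: "m \<ge> 1" "b m < L + \<epsilon>"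
    using cInf_lessD[of "b ` {1..}" "L + \<epsilon>"] \<open>\<epsilon> > 0\<close> by (auto simp: L_def)
  obtain B where B: "B \<longlonglongrightarrow> b m" and below_B: "eventually (\<lambda>k. b k \<le> B k) sequentially"
    using below[OF m(1)] by blast
  from B m(2) have "eventually (\<lambda>k. B k < L + \<epsilon>) sequentially"
    by (rule order_tendstoD)
  with below_B show "eventually (\<lambda>k. dist (b k) (Inf (b ` {1..})) < \<epsilon>) sequentially"
    using eventually_ge_at_top[of 1]
  proof eventually_elim
    case (elim k)
    have "L \<le> b k" unfolding L_def using bdd elim(3) by (intro cInf_lower) auto
    thus ?case using elim(1,2) \<open>\<epsilon> > 0\<close> by (simp add: dist_real_def L_def)
  qed
qed

locale power_submultiplicative =
  fixes a :: "nat \<Rightarrow> real" and p :: nat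
  assumes p_ge_2: "p \<ge> 2" and nonneg: "\<And>k. a k \<ge> 0"
    and submult: "\<And>k l. k \<ge> 1 \<Longrightarrow> l \<ge> 1 \<Longrightarrow> a (k + l) \<le> a k * a l ^ p ^ k"
begin

text \<open>The exponent makes \<open>normalized_root\<close> constant on the extremal sequences
  \<open>a k = c powr ((p ^ k - 1) / (p - 1))\<close>.\<close>

definition normalized_root :: "nat \<Rightarrow> real" where
  "normalized_root k = a k powr ((real p - 1) / (real p ^ k - 1))"

lemma p_gt_1: "real p > 1"
  using p_ge_2 by simp

lemma p_power_gt_1: "k \<ge> 1 \<Longrightarrow> real p ^ k > 1"
  using p_gt_1 by (simp add: one_less_power)

lemma normalized_root_exponent_nonneg: "k \<ge> 1 \<Longrightarrow> (real p - 1) / (real p ^ k - 1) \<ge> 0"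
  using p_power_gt_1 p_gt_1 by simp

lemma normalized_root_nonneg: "normalized_root k \<ge> 0"
  by (simp add: normalized_root_def)

lemma le_first_powr: "k \<ge> 1 \<Longrightarrow> a k \<le> a 1 powr ((real p ^ k - 1) / (real p - 1))"
proof (induction k rule: nat_induct_at_least)
  case base
  thus ?case using p_gt_1 nonneg[of 1] by simp
next
  case (Suc k)
  define E where "E = (real p ^ k - 1) / (real p - 1)"
  have "a (Suc k) \<le> a 1 * a k ^ p" using submult[of 1 k] Suc.hyps by simp
  also have "\<dots> \<le> a 1 * (a 1 powr E) ^ p"
    using Suc.IH nonneg by (intro mult_left_mono power_mono) (auto simp: E_def)
  also have "\<dots> = a 1 powr (1 + E * real p)"
    using nonneg[of 1]
    by (cases "a 1 = 0") (simp_all add: powr_realpow[symmetric] powr_powr powr_add)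
  also have "1 + E * real p = (real p ^ Suc k - 1) / (real p - 1)"
    using p_gt_1 by (simp add: E_def field_simps)
  finally show ?case .
qed

lemma normalized_root_le_first: "k \<ge> 1 \<Longrightarrow> normalized_root k \<le> a 1"
proof -
  assume k: "k \<ge> 1"
  have "normalized_root k
      \<le> (a 1 powr ((real p ^ k - 1) / (real p - 1))) powr ((real p - 1) / (real p ^ k - 1))"
    unfolding normalized_root_def
      by (intro powr_mono2 normalized_root_exponent_nonneg nonneg le_first_powr k)
  also have "\<dots> = a 1" using p_power_gt_1[OF k] p_gt_1 nonneg[of 1] by (simp add: powr_powr)
  finally show ?thesis .
qed

lemma normalized_root_double_le: "m \<ge> 1 \<Longrightarrow> normalized_root (2 * m) \<le> normalized_root m"
proof -
  assume m: "m \<ge> 1"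
  have "a (2 * m) \<le> a m * a m ^ p ^ m" using submult[OF m m] by (simp add: mult_2)
  hence a2: "a (2 * m) \<le> a m powr (1 + real p ^ m)"
    using nonneg[of m] by (cases "a m = 0") (simp_all add: powr_realpow[symmetric] powr_add)
  have "(1 + real p ^ m) * ((real p - 1) / (real p ^ (2 * m) - 1))
      = (real p - 1) / (real p ^ m - 1)"
  proof -
    define Q where "Q = real p ^ m"
    have "real p ^ (2 * m) = Q * Q" by (simp add: Q_def mult_2 power_add)
    hence "real p ^ (2 * m) - 1 = (Q - 1) * (Q + 1)" by (simp add: algebra_simps)
    moreover have "Q - 1 \<noteq> 0" "Q + 1 \<noteq> 0" using p_power_gt_1[OF m] by (auto simp: Q_def)
    ultimately show ?thesis by (simp add: Q_def[symmetric] add.commute)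
  qed
  hence "(a m powr (1 + real p ^ m)) powr ((real p - 1) / (real p ^ (2 * m) - 1))
      = normalized_root m"
    by (simp add: normalized_root_def powr_powr)
  moreover have "normalized_root (2 * m)
      \<le> (a m powr (1 + real p ^ m)) powr ((real p - 1) / (real p ^ (2 * m) - 1))"
    unfolding normalized_root_def using m
      by (intro powr_mono2 normalized_root_exponent_nonneg nonneg a2) simp
  ultimately show ?thesis by simp
qed

lemma decseq_normalized_root_doubling: "m \<ge> 1 \<Longrightarrow> decseq (\<lambda>l. normalized_root (m * 2 ^ l))"
  by (rule decseq_SucI) (use normalized_root_double_le[of "m * 2 ^ _"] in \<open>simp add: mult_ac\<close>)

lemma normalized_root_eventually_zero:
  assumes "r \<ge> 1" "a r = 0"
  shows "eventually (\<lambda>k. normalized_root k = 0) sequentially"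
  using eventually_gt_at_top[of r]
proof eventually_elim
  case (elim k)
  have "a k \<le> a r * a (k - r) ^ p ^ r" using submult[of r "k - r"] assms elim by simp
  thus ?case using assms nonneg[of k] by (simp add: normalized_root_def)
qed

context
  assumes pos: "\<And>k. k \<ge> 1 \<Longrightarrow> a k > 0"
begin

text \<open>In logarithmic coordinates \<open>c k = ln (a k)\<close> the hypothesis becomes additive,
  \<open>c (k + l) \<le> c k + p ^ k * c l\<close>, and \<open>normalized_root\<close> is the exponential of a multiple
  of \<open>c k / (p ^ k - 1)\<close>.\<close>

lemma ln_submult:
  assumes "k \<ge> 1" "l \<ge> 1"
  shows "ln (a (k + l)) \<le> ln (a k) + real p ^ k * ln (a l)"
proof -
  have "ln (a (k + l)) \<le> ln (a k * a l ^ p ^ k)"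
    using submult[OF assms] pos assms by (subst ln_le_cancel_iff) auto
  also have "\<dots> = ln (a k) + real (p ^ k) * ln (a l)"
    using pos[OF assms(1)] pos[OF assms(2)] by (simp add: ln_mult ln_realpow)
  finally show ?thesis by simp
qed

lemma ln_mult_le:
  assumes m: "m \<ge> 1"
  shows "q \<ge> 1 \<Longrightarrow> ln (a (q * m)) \<le> ln (a m) * (real p ^ (q * m) - 1) / (real p ^ m - 1)"
proof (induction q rule: nat_induct_at_least)
  case base
  thus ?case using p_power_gt_1[OF m] by simp
next
  case (Suc q)
  have "ln (a (Suc q * m)) \<le> ln (a m) + real p ^ m * ln (a (q * m))"
    using ln_submult[of m "q * m"] m Suc.hyps by (simp add: add.commute)
  also have "\<dots> \<le> ln (a m) + real p ^ m * (ln (a m) * (real p ^ (q * m) - 1) / (real p ^ m - 1))"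
    using Suc.IH by (intro add_left_mono mult_left_mono) auto
  also have "\<dots> = ln (a m) * (real p ^ (Suc q * m) - 1) / (real p ^ m - 1)"
    using p_power_gt_1[OF m] by (simp add: field_simps power_add)
  finally show ?case .
qed

lemma normalized_root_eq_exp:
  "k \<ge> 1 \<Longrightarrow> normalized_root k = exp ((real p - 1) * (ln (a k) / (real p ^ k - 1)))"
  using pos[of k] by (simp add: normalized_root_def powr_def field_simps)

text \<open>Writing \<open>k = r + q * m\<close> with \<open>1 \<le> r \<le> m\<close>, the quotient \<open>c k / (p ^ k - 1)\<close> exceeds
  that of \<open>m\<close> by at most a constant divided by \<open>p ^ k - 1\<close>.\<close>

lemma normalized_ln_le:
  assumes m: "m \<ge> 1" and k: "k > m"
  defines "\<delta> \<equiv> ln (a m) / (real p ^ m - 1)"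
  shows "ln (a k) / (real p ^ k - 1)
    \<le> \<delta> + (\<Sum>r\<in>{1..m}. \<bar>ln (a r) - \<delta> * (real p ^ r - 1)\<bar>) / (real p ^ k - 1)"
proof -
  define q r where "q = (k - 1) div m" and "r = (k - 1) mod m + 1"
  have kqr: "k = r + q * m" using k m div_mult_mod_eq[of "k - 1" m] unfolding q_def r_def
    by linarith
  have r: "1 \<le> r" "r \<le> m" using m by (auto simp: r_def Suc_leI)
  have q: "q \<ge> 1" using k m div_le_mono[of m "k - 1" m] by (simp add: q_def)
  have "ln (a k) \<le> ln (a r) + real p ^ r * ln (a (q * m))"
    unfolding kqr using ln_submult[OF r(1)] q m by simp
  also have "\<dots> \<le> ln (a r) + real p ^ r * (ln (a m) * (real p ^ (q * m) - 1) / (real p ^ m - 1))"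
    using ln_mult_le[OF m q] by (intro add_left_mono mult_left_mono) auto
  also have "\<dots> = \<delta> * (real p ^ k - 1) + (ln (a r) - \<delta> * (real p ^ r - 1))"
    unfolding kqr \<delta>_def by (simp add: power_add divide_inverse algebra_simps)
  also have "\<dots> \<le> \<delta> * (real p ^ k - 1) + (\<Sum>r\<in>{1..m}. \<bar>ln (a r) - \<delta> * (real p ^ r - 1)\<bar>)"
  proof (intro add_left_mono)
    have "ln (a r) - \<delta> * (real p ^ r - 1) \<le> \<bar>ln (a r) - \<delta> * (real p ^ r - 1)\<bar>" by simp
    also have "\<dots> \<le> (\<Sum>r\<in>{1..m}. \<bar>ln (a r) - \<delta> * (real p ^ r - 1)\<bar>)"
      using r by (intro member_le_sum) auto
    finally show "ln (a r) - \<delta> * (real p ^ r - 1)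
        \<le> (\<Sum>r\<in>{1..m}. \<bar>ln (a r) - \<delta> * (real p ^ r - 1)\<bar>)" .
  qed
  finally have le: "ln (a k)
      \<le> \<delta> * (real p ^ k - 1) + (\<Sum>r\<in>{1..m}. \<bar>ln (a r) - \<delta> * (real p ^ r - 1)\<bar>)" .
  have "real p ^ k - 1 > 0" using p_power_gt_1[of k] k by simp
  with divide_right_mono[OF le, of "real p ^ k - 1"] show ?thesis by (simp add: add_divide_distrib)
qed

lemma normalized_root_le_tendsto:
  assumes m: "m \<ge> 1"
  shows "\<exists>B. B \<longlonglongrightarrow> normalized_root m \<and> eventually (\<lambda>k. normalized_root k \<le> B k) sequentially"
proof -
  define \<delta> where "\<delta> = ln (a m) / (real p ^ m - 1)"
  define K where "K = (\<Sum>r\<in>{1..m}. \<bar>ln (a r) - \<delta> * (real p ^ r - 1)\<bar>)"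
  define B where "B k = exp ((real p - 1) * (\<delta> + K / (real p ^ k - 1)))" for k
  have "filterlim (\<lambda>k. norm (real p ^ k)) at_top sequentially"
    using p_gt_1
    by (intro filterlim_at_infinity_imp_norm_at_top filterlim_realpow_sequentially_gt1) simp
  hence "filterlim (\<lambda>k. real p ^ k) at_top sequentially" by (simp add: norm_power)
  hence "filterlim (\<lambda>k. -1 + real p ^ k) at_top sequentially"
    by (intro filterlim_tendsto_add_at_top[OF tendsto_const])
  hence "(\<lambda>k. K * inverse (-1 + real p ^ k)) \<longlonglongrightarrow> K * 0"
    by (intro tendsto_mult tendsto_const tendsto_inverse_0_at_top)
  hence "(\<lambda>k. K / (real p ^ k - 1)) \<longlonglongrightarrow> 0" by (simp add: divide_inverse)
  hence "B \<longlonglongrightarrow> exp ((real p - 1) * (\<delta> + 0))"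
    unfolding B_def by (intro tendsto_intros)
  moreover have "exp ((real p - 1) * (\<delta> + 0)) = normalized_root m"
    using normalized_root_eq_exp[OF m] by (simp add: \<delta>_def)
  moreover have "eventually (\<lambda>k. normalized_root k \<le> B k) sequentially"
    using eventually_gt_at_top[of m]
  proof eventually_elim
    case (elim k)
    have "(real p - 1) * (ln (a k) / (real p ^ k - 1)) \<le> (real p - 1) * (\<delta> + K / (real p ^ k - 1))"
      using normalized_ln_le[OF m elim] p_gt_1 by (intro mult_left_mono) (simp_all add: \<delta>_def K_def)
    thus ?case using normalized_root_eq_exp[of k] elim m by (simp add: B_def)
  qed
  ultimately show ?thesis by auto
qed

end

lemma convergent_normalized_root: "convergent normalized_root"
proof (cases "\<exists>r\<ge>1. a r = 0")
  case True
  then obtain r where "r \<ge> 1" "a r = 0" by blast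
  hence "normalized_root \<longlonglongrightarrow> 0" by (rule tendsto_eventually[OF normalized_root_eventually_zero])
  thus ?thesis by (auto simp: convergent_def)
next
  case False
  hence "\<And>k. k \<ge> 1 \<Longrightarrow> a k > 0" using nonneg by (metis order.not_eq_order_implies_strict)
  hence "normalized_root \<longlonglongrightarrow> Inf (normalized_root ` {1..})"
    by (intro tendsto_Inf_if_eventually_below normalized_root_nonneg normalized_root_le_tendsto)
  thus ?thesis by (auto simp: convergent_def)
qed

end

section \<open>Spectral norms of the iterates\<close>

context
  fixes p :: nat and f :: "('n::finite) ptensor"
begin

abbreviation iter_norm :: "nat \<Rightarrow> real" where
  "iter_norm k \<equiv> spec_norm (p ^ k) (titer p f k)"

lemma norm_iterate_le: "norm ((tensor_map p f ^^ k) x) \<le> iter_norm k * norm x ^ p ^ k"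
  using norm_tensor_map_le_spec_norm[OF sym_tensor_titer, of p k f x]
    by (simp add: tensor_map_titer)

lemma iter_norm_attained:
  obtains x where "norm x = 1" "norm ((tensor_map p f ^^ k) x) = iter_norm k"
  using spec_norm_attained[OF sym_tensor_titer, of p k f] by (metis tensor_map_titer)

lemma iter_norm_nonneg: "iter_norm k \<ge> 0"
  by (rule spec_norm_nonneg[OF sym_tensor_titer])

lemma iter_norm_eq_0_iff: "iter_norm k = 0 \<longleftrightarrow> titer p f k = (\<lambda>_ _. 0)"
  by (rule spec_norm_eq_0_iff[OF sym_tensor_titer])

lemma iterate_scaleR: "(tensor_map p f ^^ k) (r *\<^sub>R x) = r ^ p ^ k *\<^sub>R (tensor_map p f ^^ k) x"
  using tensor_map_scaleR[of "p ^ k" "titer p f k" r x] by (simp add: tensor_map_titer)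

lemma iter_norm_add_le: "iter_norm (k + l) \<le> iter_norm k * iter_norm l ^ p ^ k"
proof -
  obtain x where x: "norm x = 1" "norm ((tensor_map p f ^^ (k + l)) x) = iter_norm (k + l)"
    by (rule iter_norm_attained)
  have "iter_norm (k + l) = norm ((tensor_map p f ^^ k) ((tensor_map p f ^^ l) x))"
    using x(2) by (simp add: funpow_add)
  also have "\<dots> \<le> iter_norm k * norm ((tensor_map p f ^^ l) x) ^ p ^ k"
    by (rule norm_iterate_le)
  also have "\<dots> \<le> iter_norm k * iter_norm l ^ p ^ k"
    using norm_iterate_le[of l x] x(1) iter_norm_nonneg by (intro mult_left_mono power_mono) auto
  finally show ?thesis .
qed

lemma norm_iterate_add_normalized:
  assumes "iter_norm l > 0"
  shows "norm ((tensor_map p f ^^ (k + l)) x)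
    = iter_norm l ^ p ^ k *
      norm ((tensor_map p f ^^ k) ((1 / iter_norm l) *\<^sub>R (tensor_map p f ^^ l) x))"
proof -
  have "(tensor_map p f ^^ l) x = iter_norm l *\<^sub>R ((1 / iter_norm l) *\<^sub>R (tensor_map p f ^^ l) x)"
    using assms by simp
  hence "(tensor_map p f ^^ (k + l)) x
      = iter_norm l ^ p ^ k *\<^sub>R
        (tensor_map p f ^^ k) ((1 / iter_norm l) *\<^sub>R (tensor_map p f ^^ l) x)"
    by (metis funpow_add comp_apply iterate_scaleR)
  thus ?thesis using assms by simp
qed

text \<open>In the equality case, a maximizer of \<open>F\<^sup>k\<^sup>+\<^sup>l\<close> is a maximizer of \<open>F\<^sup>l\<close> whose
  normalized image maximizes \<open>F\<^sup>k\<close>.\<close>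

lemma iter_norm_add_eq_imp:
  assumes p: "p > 0" and eq: "iter_norm (k + l) = iter_norm k * iter_norm l ^ p ^ k"
    and pos: "iter_norm l > 0"
  shows "\<exists>x. norm x = 1 \<and> norm ((tensor_map p f ^^ l) x) = iter_norm l
    \<and> norm ((tensor_map p f ^^ k) ((1 / iter_norm l) *\<^sub>R (tensor_map p f ^^ l) x))
      = iter_norm k"
proof (cases "iter_norm k = 0")
  case True
  obtain x where x: "norm x = 1" "norm ((tensor_map p f ^^ l) x) = iter_norm l"
    by (rule iter_norm_attained)
  thus ?thesis using norm_iterate_le[of k] True by (metis mult_zero_left norm_le_zero_iff norm_zero)
next
  case False
  hence k_pos: "iter_norm k > 0" using iter_norm_nonneg[of k] by simp
  obtain x where x: "norm x = 1" "norm ((tensor_map p f ^^ (k + l)) x) = iter_norm (k + l)"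
    by (rule iter_norm_attained)
  define y where "y = (1 / iter_norm l) *\<^sub>R (tensor_map p f ^^ l) x"
  have "iter_norm l ^ p ^ k * norm ((tensor_map p f ^^ k) y) = norm ((tensor_map p f ^^ (k + l)) x)"
    using norm_iterate_add_normalized[OF pos, of k x] by (simp add: y_def)
  also have "\<dots> = iter_norm l ^ p ^ k * iter_norm k" using x(2) eq by (simp add: mult.commute)
  finally have Fy: "norm ((tensor_map p f ^^ k) y) = iter_norm k" using pos by simp
  have "norm y \<le> 1"
    using norm_iterate_le[of l x] x(1) pos by (simp add: y_def divide_le_eq_1)
  moreover have "1 \<le> norm y ^ p ^ k"
    using norm_iterate_le[of k y] Fy k_pos by simp
  moreover have "norm y ^ p ^ k \<le> norm y" if "norm y \<le> 1"
    using power_decreasing[of 1 "p ^ k" "norm y"] that p by simp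
  ultimately have "norm y = 1" by simp
  hence "norm ((tensor_map p f ^^ l) x) = iter_norm l" using pos by (simp add: y_def)
  thus ?thesis using x(1) Fy by (auto simp: y_def)
qed

lemma iter_norm_add_eq_iff:
  assumes p: "p > 0"
  shows "iter_norm (k + l) = iter_norm k * iter_norm l ^ p ^ k \<longleftrightarrow>
    (titer p f l = (\<lambda>_ _. 0) \<or> (\<exists>x. norm x = 1 \<and> norm ((tensor_map p f ^^ l) x) = iter_norm l
      \<and> norm ((tensor_map p f ^^ k) ((1 / iter_norm l) *\<^sub>R (tensor_map p f ^^ l) x)) = iter_norm k))"
proof (cases "iter_norm l = 0")
  case True
  hence "iter_norm l ^ p ^ k = 0" using p by simp
  hence "iter_norm (k + l) \<le> 0" using iter_norm_add_le[of k l] by (metis mult_zero_right)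
  hence "iter_norm (k + l) = 0" using iter_norm_nonneg[of "k + l"] by linarith
  thus ?thesis using True iter_norm_eq_0_iff[of l] p by simp
next
  case False
  hence pos: "iter_norm l > 0" using iter_norm_nonneg[of l] by simp
  have "iter_norm k * iter_norm l ^ p ^ k \<le> iter_norm (k + l)"
    if "norm x = 1"
      "norm ((tensor_map p f ^^ k) ((1 / iter_norm l) *\<^sub>R (tensor_map p f ^^ l) x)) = iter_norm k"
    for x
    using norm_iterate_add_normalized[OF pos, of k x] norm_iterate_le[of "k + l" x] that
    by (simp add: mult.commute)
  thus ?thesis
    using iter_norm_add_eq_imp[OF p _ pos] iter_norm_add_le[of k l] False iter_norm_eq_0_iff[of l]
    by (auto intro: antisym)
qed

end

theorem theorem3p3:
  fixes p :: nat and f :: "('n::finite) ptensor"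
  assumes p2: "p \<ge> 2"
    and symF: "sym_tensor p f"
    and nz: "f \<noteq> (\<lambda>_ _. 0)"
    and not_rank1: "\<not> (\<exists>(a::real) (u::real^'n). norm u = 1 \<and> a \<noteq> 0 \<and>
          (\<forall>i is. length is = p \<longrightarrow> f i is = a * u $ i * (\<Prod>j<p. u $ (is ! j))))"
  shows "(\<forall>k\<ge>1. ftilde p f k \<le> spec_norm p f)
    \<and> (\<forall>k\<ge>1. \<forall>l\<ge>1. spec_norm (p ^ (k + l)) (titer p f (k + l))
          \<le> spec_norm (p ^ k) (titer p f k) * spec_norm (p ^ l) (titer p f l) ^ (p ^ k))
    \<and> (\<forall>m\<ge>1. decseq (\<lambda>l. ftilde p f (m * 2 ^ l)))
    \<and> convergent (ftilde p f)
    \<and> rho3 p f \<le> rho2 p f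
    \<and> (\<forall>k\<ge>1. \<forall>l\<ge>1.
         spec_norm (p ^ (k + l)) (titer p f (k + l))
           = spec_norm (p ^ k) (titer p f k) * spec_norm (p ^ l) (titer p f l) ^ (p ^ k)
         \<longleftrightarrow> (titer p f l = (\<lambda>_ _. 0)
              \<or> (\<exists>xs::real^'n. norm xs = 1
                   \<and> norm ((tensor_map p f ^^ l) xs) = spec_norm (p ^ l) (titer p f l)
                   \<and> norm ((tensor_map p f ^^ k)
                        ((1 / spec_norm (p ^ l) (titer p f l)) *\<^sub>R (tensor_map p f ^^ l) xs))
                       = spec_norm (p ^ k) (titer p f k))))"
proof -
  interpret S: power_submultiplicative "\<lambda>k. spec_norm (p ^ k) (titer p f k)" p
    using p2 iter_norm_nonneg iter_norm_add_le by unfold_locales auto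
  interpret H: power_submultiplicative "\<lambda>k. hs_norm (p ^ k) (titer p f k)" p
    using p2 hs_norm_nonneg hs_norm_titer_add_le by unfold_locales auto
  have ftilde: "ftilde p f = S.normalized_root"
    by (simp add: fun_eq_iff ftilde_def S.normalized_root_def)
  have "S.normalized_root k \<le> H.normalized_root k" if "k \<ge> 1" for k
    unfolding S.normalized_root_def H.normalized_root_def using that
    by (intro powr_mono2 S.normalized_root_exponent_nonneg iter_norm_nonneg
        spec_norm_le_hs_norm sym_tensor_titer)
  hence "lim S.normalized_root \<le> lim H.normalized_root"
    using S.convergent_normalized_root H.convergent_normalized_root
    by (intro LIMSEQ_le[of S.normalized_root _ H.normalized_root])
      (auto simp: convergent_LIMSEQ_iff)
  moreover have "rho2 p f = lim H.normalized_root"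
    unfolding rho2_def by (rule arg_cong[where f=lim]) (simp add: fun_eq_iff H.normalized_root_def)
  ultimately show ?thesis
    using S.normalized_root_le_first S.decseq_normalized_root_doubling S.convergent_normalized_root
      iter_norm_add_eq_iff[where p=p and f=f] p2
    by (simp add: ftilde rho3_def titer_1[OF symF, unfolded One_nat_def] iter_norm_add_le)
qed

end
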